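(* Assume the existence of $h$ and conditions (i)–(v) below. Let $\overleftarrow F:\mathcal M\to\mathcal V$ map $\mu\in\mathcal M$ to the unique regular solution $v$ of $\partial_tv^i(t,u)=-\hat\psi^i(t,u,\mu(t,u),v(t,u))-\sum_j\hat Q^{ij}(t,u,\mu(t,u),v(t,u))v^j(t,u)-\mathbb I_{\{Z(u)<n\}}\lambda^{Z(u)+1}(t,\mu(t,u))\big(v^{J^i(t)}(t,\overrightarrow{(u,t)})-v^i(t,u)\big)$, $v(T,u)=\Psi(Z(u),\mu(T,u))$ (this solution exists, is unique and lies in $\mathcal V$). Then, with respect to the uniform norms $\|f\|=\sup_{(t,u)\in\mathrm{TS}}\|f(t,u)\|$, $\overleftarrow F$ is Lipschitz continuous with Lipschitz constant $$(L_\Psi+K_1T)\,e^{K_2T}\sum_{i=0}^n\big(e^{K_2T}\lambda_{\max}T\big)^i.$$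
   Context: $\mathbb S=\{1,\dots,S\}$, $\mathbb A\subseteq\mathbb R^A$, $n\in\mathbb N$, $T>0$; $\mathcal P(\mathbb S)$ the simplex. Bounded Borel $\lambda=(\lambda^1,\dots,\lambda^n):[0,T]\times\mathcal P(\mathbb S)\to(0,\infty)^n$, $Q:[0,T]\times\{0,..,n\}\times\mathcal P(\mathbb S)\times\mathbb A\to\mathbb R^{S\times S}$ (intensity matrices), $\psi$ (same domain, $\mathbb R^S$-valued), $\Psi:\{0,..,n\}\times\mathcal P(\mathbb S)\to\mathbb R^S$, $J:[0,T]\times\mathcal P(\mathbb S)\to\mathbb S^{\mathbb S}$. $\mathbb U$: $u\in(\{-1\}\cup[0,T])^n$ with $0\le u^1\le\dots\le u^k$, $u^{k+1}=\dots=u^n=-1$ for some $k\in\{0,..,n\}$; $Z(u)=k$. $\mathrm{TS}=\{(t,u):\max_ku^k\le t\le T\}$; regular = absolutely continuous in $t$ for each $u$; $\overrightarrow{(u,t)}$ = $u$ with entry $Z(u)+1$ set to $t$. $h$ Borel with $h^i(t,u,m,v)\in\operatorname{argmax}_a\{\psi^i(t,Z(u),m,a)+\sum_jQ^{ij}(t,Z(u),m,a)v^j\}$; $\hat Q^{ij}(t,u,m,v)=Q^{ij}(t,Z(u),m,h^i(t,u,m,v))$, $\hat\psi^i(t,u,m,v)=\psi^i(t,Z(u),m,h^i(t,u,m,v))$. Norms: max norm on $\mathbb R^S$ and a compatible matrix norm. Conditions: (i) $\|\hat\psi(t,u,m_1,v_1)-\hat\psi(t,u,m_2,v_2)\|\le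 L_{\hat\psi}(\|m_1-m_2\|+\|v_1-v_2\|)$; (ii) same for $\hat Q$ with $L_{\hat Q}$; (iii) $\|\Psi(k,m_1)-\Psi(k,m_2)\|\le L_\Psi\|m_1-m_2\|$; (iv) $|\lambda^k(t,m_1)-\lambda^k(t,m_2)|\le L_\lambda\|m_1-m_2\|$; (v) $J^i(t,m)$ independent of $m$ (written $J^i(t)$). Constants: $Q_{\max}=\sup\|Q\|$, $\psi_{\max}=\sup\|\psi\|$, $\Psi_{\max}=\sup\|\Psi\|$, $\lambda_{\max}=\sup\lambda^k$, $v_{\max}=(\Psi_{\max}+\psi_{\max}T)e^{(Q_{\max}+\lambda_{\max})T}\sum_{i=0}^n(e^{(Q_{\max}+\lambda_{\max})T}\lambda_{\max}T)^i$, $K_1=L_{\hat\psi}+L_{\hat Q}v_{\max}+2v_{\max}L_\lambda$, $K_2=L_{\hat\psi}+v_{\max}L_{\hat Q}+Q_{\max}+\lambda_{\max}$. $\mathcal M$: functions $\mathrm{TS}\to\mathcal P(\mathbb S)$ that are $Q_{\max}$-Lipschitz in $t$. $\mathcal V$: functions $\mathrm{TS}\to\mathbb R^S$ absolutely continuous in $t$ with $\sup\|v\|\le v_{\max}$. *)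

theory Defs
  imports "HOL-Analysis.Analysis"
begin

text \<open>States: a finite type 's (playing the role of {1,...,S}).
  Vectors in R^S are functions 's => real, matrices are 's => 's => real.\<close>

definition maxnorm :: "('s::finite \<Rightarrow> real) \<Rightarrow> real" where
  "maxnorm x = Max (range (\<lambda>i. \<bar>x i\<bar>))"

text \<open>Matrix norm compatible with (induced by) the max norm: maximal absolute row sum.\<close>
definition matnorm :: "('s::finite \<Rightarrow> 's \<Rightarrow> real) \<Rightarrow> real" where
  "matnorm M = Max (range (\<lambda>i. \<Sum>j\<in>UNIV. \<bar>M i j\<bar>))"

definition prob_simplex :: "('s::finite \<Rightarrow> real) set" where
  "prob_simplex = {m. (\<forall>i. 0 \<le> m i) \<and> (\<Sum>i\<in>UNIV. m i) = 1}"

definition intensity_matrix :: "('s::finite \<Rightarrow> 's \<Rightarrow> real) \<Rightarrow> bool" where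
  "intensity_matrix M \<longleftrightarrow> (\<forall>i j. i \<noteq> j \<longrightarrow> 0 \<le> M i j) \<and> (\<forall>i. (\<Sum>j\<in>UNIV. M i j) = 0)"

text \<open>The set U: u in ({-1} \<union> [0,T])^n, encoded as a list of length n
  (entry k of the paper is u ! (k-1)), with 0 <= u^1 <= ... <= u^k and
  u^(k+1) = ... = u^n = -1 for some k.\<close>
definition Uset :: "nat \<Rightarrow> real \<Rightarrow> real list set" where
  "Uset n T = {u. length u = n \<and> (\<forall>x\<in>set u. x = -1 \<or> (0 \<le> x \<and> x \<le> T)) \<and>
      (\<exists>k\<le>n. (\<forall>i<k. 0 \<le> u ! i) \<and> sorted (take k u) \<and> (\<forall>i. k \<le> i \<and> i < n \<longrightarrow> u ! i = -1))}"

definition Z :: "real list \<Rightarrow> nat" where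
  "Z u = length (filter (\<lambda>x. x \<noteq> -1) u)"

text \<open>u with entry Z(u)+1 set to t.\<close>
definition push :: "real list \<Rightarrow> real \<Rightarrow> real list" where
  "push u t = u[Z u := t]"

definition TS :: "nat \<Rightarrow> real \<Rightarrow> (real \<times> real list) set" where
  "TS n T = {(t,u). u \<in> Uset n T \<and> 0 \<le> t \<and> t \<le> T \<and> (\<forall>x\<in>set u. x \<le> t)}"

definition abs_cont_on :: "real \<Rightarrow> real \<Rightarrow> (real \<Rightarrow> 's::finite \<Rightarrow> real) \<Rightarrow> bool" where
  "abs_cont_on a b f \<longleftrightarrow> (\<forall>\<epsilon>>0. \<exists>\<delta>>0. \<forall>(N::nat) (c::nat \<Rightarrow> real) d.
      (\<forall>k<N. a \<le> c k \<and> c k \<le> d k \<and> d k \<le> b) \<and>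
      (\<forall>k<N. \<forall>l<N. k \<noteq> l \<longrightarrow> d k \<le> c l \<or> d l \<le> c k) \<and>
      (\<Sum>k<N. d k - c k) < \<delta> \<longrightarrow> (\<Sum>k<N. maxnorm (\<lambda>i. f (d k) i - f (c k) i)) < \<epsilon>)"

definition Mset :: "nat \<Rightarrow> real \<Rightarrow> real \<Rightarrow> (real \<Rightarrow> real list \<Rightarrow> 's::finite \<Rightarrow> real) set" where
  "Mset n T Qmax = {\<mu>. (\<forall>(t,u)\<in>TS n T. \<mu> t u \<in> prob_simplex) \<and>
     (\<forall>t s u. (t,u) \<in> TS n T \<longrightarrow> (s,u) \<in> TS n T \<longrightarrow> maxnorm (\<lambda>i. \<mu> t u i - \<mu> s u i) \<le> Qmax * \<bar>t - s\<bar>)}"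

text \<open>Lower end of the time interval {t. (t,u) in TS}: max(0, max_k u^k).\<close>
definition tstart :: "real list \<Rightarrow> real" where
  "tstart u = Max (insert 0 (set u))"

definition Vset :: "nat \<Rightarrow> real \<Rightarrow> real \<Rightarrow> (real \<Rightarrow> real list \<Rightarrow> 's::finite \<Rightarrow> real) set" where
  "Vset n T vmax = {v. (\<forall>u\<in>Uset n T. abs_cont_on (tstart u) T (\<lambda>t. v t u)) \<and>
     (\<forall>(t,u)\<in>TS n T. maxnorm (v t u) \<le> vmax)}"

text \<open>Qh i j t u m v and psih i t u m v denote hat Q^{ij}(t,u,m,v), hat psi^i(t,u,m,v).\<close>
definition regular_solution ::
  "nat \<Rightarrow> real \<Rightarrow> (nat \<Rightarrow> real \<Rightarrow> ('s::finite \<Rightarrow> real) \<Rightarrow> real)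
   \<Rightarrow> ('s \<Rightarrow> 's \<Rightarrow> real \<Rightarrow> real list \<Rightarrow> ('s \<Rightarrow> real) \<Rightarrow> ('s \<Rightarrow> real) \<Rightarrow> real)
   \<Rightarrow> ('s \<Rightarrow> real \<Rightarrow> real list \<Rightarrow> ('s \<Rightarrow> real) \<Rightarrow> ('s \<Rightarrow> real) \<Rightarrow> real)
   \<Rightarrow> (nat \<Rightarrow> ('s \<Rightarrow> real) \<Rightarrow> 's \<Rightarrow> real)
   \<Rightarrow> (real \<Rightarrow> ('s \<Rightarrow> real) \<Rightarrow> 's \<Rightarrow> 's)
   \<Rightarrow> (real \<Rightarrow> real list \<Rightarrow> 's \<Rightarrow> real)
   \<Rightarrow> (real \<Rightarrow> real list \<Rightarrow> 's \<Rightarrow> real) \<Rightarrow> bool" where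
  "regular_solution n T lam Qh psih Psi J \<mu> v \<longleftrightarrow>
     (\<forall>u\<in>Uset n T.
        abs_cont_on (tstart u) T (\<lambda>t. v t u) \<and>
        (AE t in lborel. t \<in> {tstart u..T} \<longrightarrow>
          (\<forall>i. ((\<lambda>s. v s u i) has_real_derivative
               (- psih i t u (\<mu> t u) (v t u)
                - (\<Sum>j\<in>UNIV. Qh i j t u (\<mu> t u) (v t u) * v t u j)
                - (if Z u < n then lam (Z u + 1) t (\<mu> t u)
                     * (v t (push u t) (J t (\<mu> t u) i) - v t u i) else 0)))
             (at t within {tstart u..T}))) \<and>
        v T u = Psi (Z u) (\<mu> T u))"

end

(*
  For a fixed history u, the difference w = v1(.,u) - v2(.,u) solves a linear backward equation.
  By conditions (i)-(v) its right-hand side is bounded by K1 * dm + lammax * B + K2 * |w|, where dm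
  bounds |mu1 - mu2| and B bounds w after the next jump, at the history push u t.  A backward
  Gronwall argument then gives |w| <= (L_Psi * dm + (K1 * dm + lammax * B) * T) * exp (K2 * T).
  Every jump increases Z u, and Z u <= n, so induction on n - Z u turns this recursion into the
  geometric sum of the claim.

  The Gronwall argument is run for absolutely continuous functions whose equation only holds
  almost everywhere.  It rests on the fact that an absolutely continuous function with a
  nonnegative derivative almost everywhere is nondecreasing, proved with Cousin's lemma: tags
  where the derivative exists contribute almost nonnegative increments, and the intervals tagged
  in the null set have small total length and hence small total variation.
*)
theory Submission
  imports Defs
begin

section \<open>Max norm and row-sum norm\<close>

lemma abs_le_maxnorm: "\<bar>x i\<bar> \<le> maxnorm (x :: 's::finite \<Rightarrow> real)"
  unfolding maxnorm_def by (rule Max_ge) auto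

lemma maxnorm_leI: "(\<And>i. \<bar>x i\<bar> \<le> B) \<Longrightarrow> maxnorm (x :: 's::finite \<Rightarrow> real) \<le> B"
  unfolding maxnorm_def by (subst Max_le_iff) auto

lemma maxnorm_nonneg: "0 \<le> maxnorm (x :: 's::finite \<Rightarrow> real)"
  using abs_le_maxnorm[of x] abs_ge_zero order_trans by blast

lemma maxnorm_diff_commute: "maxnorm (\<lambda>i. x i - y i) = maxnorm (\<lambda>i. y i - x i)"
  unfolding maxnorm_def by (simp add: abs_minus_commute)

lemma abs_maxnorm_diff_le: "\<bar>maxnorm x - maxnorm y\<bar> \<le> maxnorm (\<lambda>i. x i - y i)"
proof -
  have "\<bar>x i\<bar> \<le> maxnorm y + maxnorm (\<lambda>i. x i - y i)"
    and "\<bar>y i\<bar> \<le> maxnorm x + maxnorm (\<lambda>i. x i - y i)" for i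
    using abs_le_maxnorm[of x i] abs_le_maxnorm[of y i] abs_le_maxnorm[of "\<lambda>i. x i - y i" i]
    by linarith+
  then have "maxnorm x \<le> maxnorm y + maxnorm (\<lambda>i. x i - y i)"
    "maxnorm y \<le> maxnorm x + maxnorm (\<lambda>i. x i - y i)"
    by (simp_all add: maxnorm_leI)
  then show ?thesis by linarith
qed

lemma row_sum_le_matnorm: "(\<Sum>j\<in>UNIV. \<bar>M i j\<bar>) \<le> matnorm M"
  unfolding matnorm_def by (rule Max_ge) auto

lemma matnorm_leI: "(\<And>i. (\<Sum>j\<in>UNIV. \<bar>M i j\<bar>) \<le> B) \<Longrightarrow> matnorm M \<le> B"
  unfolding matnorm_def by (subst Max_le_iff) auto

lemma matnorm_nonneg: "0 \<le> matnorm (M :: 's::finite \<Rightarrow> 's \<Rightarrow> real)"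
  by (rule order_trans[OF sum_nonneg row_sum_le_matnorm]) simp

lemma abs_mat_vec_le: "\<bar>\<Sum>j\<in>UNIV. M i j * x j\<bar> \<le> matnorm M * maxnorm x"
proof -
  have "\<bar>\<Sum>j\<in>UNIV. M i j * x j\<bar> \<le> (\<Sum>j\<in>UNIV. \<bar>M i j\<bar> * maxnorm x)"
    by (rule order_trans[OF sum_abs sum_mono]) (simp add: abs_mult abs_le_maxnorm mult_left_mono)
  also have "\<dots> \<le> matnorm M * maxnorm x"
    by (simp add: sum_distrib_right[symmetric] mult_right_mono row_sum_le_matnorm maxnorm_nonneg)
  finally show ?thesis .
qed

lemma abs_mat_vec_diff_le:
  "\<bar>(\<Sum>j\<in>UNIV. M i j * x j) - (\<Sum>j\<in>UNIV. N i j * y j)\<bar>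
     \<le> matnorm (\<lambda>i j. M i j - N i j) * maxnorm x + matnorm N * maxnorm (\<lambda>j. x j - y j)"
proof -
  have "(\<Sum>j\<in>UNIV. M i j * x j) - (\<Sum>j\<in>UNIV. N i j * y j)
      = (\<Sum>j\<in>UNIV. (M i j - N i j) * x j) + (\<Sum>j\<in>UNIV. N i j * (x j - y j))"
    by (simp add: sum_subtractf[symmetric] sum.distrib[symmetric] algebra_simps)
  then show ?thesis
    using abs_mat_vec_le[of "\<lambda>i j. M i j - N i j" i x] abs_mat_vec_le[of N i "\<lambda>j. x j - y j"]
    by linarith
qed

lemma abs_mult_diff_le: "\<bar>a * x - b * y :: real\<bar> \<le> \<bar>a - b\<bar> * \<bar>x\<bar> + \<bar>b\<bar> * \<bar>x - y\<bar>"
proof -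
  have "a * x - b * y = (a - b) * x + b * (x - y)" by (simp add: algebra_simps)
  then show ?thesis by (simp add: abs_mult abs_triangle_ineq[THEN order_trans])
qed

lemma maxnorm_simplex_diff_le_1:
  fixes m1 m2 :: "'s::finite \<Rightarrow> real"
  assumes "m1 \<in> prob_simplex" "m2 \<in> prob_simplex"
  shows "maxnorm (\<lambda>i. m1 i - m2 i) \<le> 1"
proof (rule maxnorm_leI)
  have "0 \<le> m i \<and> m i \<le> 1" if "m \<in> prob_simplex" for m :: "'s \<Rightarrow> real" and i
    using that member_le_sum[of i UNIV m] unfolding prob_simplex_def by auto
  then show "\<bar>m1 i - m2 i\<bar> \<le> 1" for i
    using assms by (smt (verit))
qed

section \<open>Absolute continuity\<close>

definition nonoverlapping_intervals ::
    "real \<Rightarrow> real \<Rightarrow> nat \<Rightarrow> (nat \<Rightarrow> real) \<Rightarrow> (nat \<Rightarrow> real) \<Rightarrow> bool" where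
  "nonoverlapping_intervals a b N c d \<longleftrightarrow>
     (\<forall>k<N. a \<le> c k \<and> c k \<le> d k \<and> d k \<le> b) \<and> (\<forall>k<N. \<forall>l<N. k \<noteq> l \<longrightarrow> d k \<le> c l \<or> d l \<le> c k)"

definition abs_cont_real_on :: "real \<Rightarrow> real \<Rightarrow> (real \<Rightarrow> real) \<Rightarrow> bool" where
  "abs_cont_real_on a b F \<longleftrightarrow> (\<forall>\<epsilon>>0. \<exists>\<delta>>0. \<forall>N c d. nonoverlapping_intervals a b N c d \<and>
      (\<Sum>k<N. d k - c k) < \<delta> \<longrightarrow> (\<Sum>k<N. \<bar>F (d k) - F (c k)\<bar>) < \<epsilon>)"

lemma nonoverlapping_intervals_mono:
  "nonoverlapping_intervals s b N c d \<Longrightarrow> a \<le> s \<Longrightarrow> nonoverlapping_intervals a b N c d"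
  unfolding nonoverlapping_intervals_def by force

lemma abs_cont_on_iff:
  "abs_cont_on a b f \<longleftrightarrow> (\<forall>\<epsilon>>0. \<exists>\<delta>>0. \<forall>N c d. nonoverlapping_intervals a b N c d \<and>
      (\<Sum>k<N. d k - c k) < \<delta> \<longrightarrow> (\<Sum>k<N. maxnorm (\<lambda>i. f (d k) i - f (c k) i)) < \<epsilon>)"
  unfolding abs_cont_on_def nonoverlapping_intervals_def by (simp only: conj_assoc)

lemma abs_cont_onE:
  fixes f :: "real \<Rightarrow> 's::finite \<Rightarrow> real"
  assumes "abs_cont_on a b f" and "0 < e"
  obtains \<delta> where "0 < \<delta>" and "\<And>N c d. nonoverlapping_intervals a b N c d \<Longrightarrow>
    (\<Sum>k<N. d k - c k) < \<delta> \<Longrightarrow> (\<Sum>k<N. maxnorm (\<lambda>i. f (d k) i - f (c k) i)) < e"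
proof -
  from assms(1)[unfolded abs_cont_on_iff, rule_format, OF assms(2)]
  obtain \<delta> where "0 < \<delta>" and \<delta>: "\<forall>N c d. nonoverlapping_intervals a b N c d \<and>
      (\<Sum>k<N. d k - c k) < \<delta> \<longrightarrow> (\<Sum>k<N. maxnorm (\<lambda>i. f (d k) i - f (c k) i)) < e"
    by blast
  show ?thesis
    by (rule that[OF \<open>0 < \<delta>\<close>]) (simp add: \<delta>)
qed

lemma abs_cont_on_component:
  fixes f :: "real \<Rightarrow> 's::finite \<Rightarrow> real"
  assumes ac: "abs_cont_on a b f" and "a \<le> s" and "\<bar>\<sigma>\<bar> \<le> 1"
  shows "abs_cont_real_on s b (\<lambda>t. \<sigma> * f t i)"
  unfolding abs_cont_real_on_def
proof (intro allI impI)
  fix e :: real assume "e > 0"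
  with ac obtain \<delta> where "\<delta> > 0" and \<delta>: "\<And>N c d. nonoverlapping_intervals a b N c d \<Longrightarrow>
    (\<Sum>k<N. d k - c k) < \<delta> \<Longrightarrow> (\<Sum>k<N. maxnorm (\<lambda>i. f (d k) i - f (c k) i)) < e"
    by (rule abs_cont_onE) blast
  have "\<bar>\<sigma> * f y i - \<sigma> * f x i\<bar> \<le> maxnorm (\<lambda>i. f y i - f x i)" for x y
  proof -
    have "\<bar>\<sigma> * f y i - \<sigma> * f x i\<bar> = \<bar>\<sigma>\<bar> * \<bar>f y i - f x i\<bar>"
      by (metis abs_mult right_diff_distrib)
    also have "\<dots> \<le> \<bar>f y i - f x i\<bar>"
      using \<open>\<bar>\<sigma>\<bar> \<le> 1\<close> by (simp add: mult_left_le_one_le)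
    finally show ?thesis using abs_le_maxnorm[of "\<lambda>i. f y i - f x i" i] by linarith
  qed
  then have sum_le: "(\<Sum>k<N. \<bar>\<sigma> * f (d k) i - \<sigma> * f (c k) i\<bar>)
      \<le> (\<Sum>k<N. maxnorm (\<lambda>i. f (d k) i - f (c k) i))" for N :: nat and c d :: "nat \<Rightarrow> real"
    by (rule sum_mono)
  show "\<exists>\<delta>>0. \<forall>N c d. nonoverlapping_intervals s b N c d \<and>
      (\<Sum>k<N. d k - c k) < \<delta> \<longrightarrow> (\<Sum>k<N. \<bar>\<sigma> * f (d k) i - \<sigma> * f (c k) i\<bar>) < e"
  proof (intro exI[of _ \<delta>] conjI allI impI \<open>0 < \<delta>\<close>)
    fix N c d
    assume "nonoverlapping_intervals s b N c d \<and> (\<Sum>k<N. d k - c k) < \<delta>"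
    with \<open>a \<le> s\<close> have "(\<Sum>k<N. maxnorm (\<lambda>i. f (d k) i - f (c k) i)) < e"
      by (blast intro: \<delta> nonoverlapping_intervals_mono)
    with sum_le show "(\<Sum>k<N. \<bar>\<sigma> * f (d k) i - \<sigma> * f (c k) i\<bar>) < e"
      by (rule le_less_trans)
  qed
qed

lemma abs_cont_on_diff:
  fixes f g :: "real \<Rightarrow> 's::finite \<Rightarrow> real"
  assumes f: "abs_cont_on a b f" and g: "abs_cont_on a b g"
  shows "abs_cont_on a b (\<lambda>t i. f t i - g t i)"
  unfolding abs_cont_on_iff
proof (intro allI impI)
  fix e :: real assume "0 < e"
  then have "0 < e / 2" by simp
  from f \<open>0 < e / 2\<close> obtain \<delta>1 where "0 < \<delta>1"
    and \<delta>1: "\<And>N c d. nonoverlapping_intervals a b N c d \<Longrightarrow> (\<Sum>k<N. d k - c k) < \<delta>1 \<Longrightarrow>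
                 (\<Sum>k<N. maxnorm (\<lambda>i. f (d k) i - f (c k) i)) < e / 2"
    by (rule abs_cont_onE) blast
  from g \<open>0 < e / 2\<close> obtain \<delta>2 where "0 < \<delta>2"
    and \<delta>2: "\<And>N c d. nonoverlapping_intervals a b N c d \<Longrightarrow> (\<Sum>k<N. d k - c k) < \<delta>2 \<Longrightarrow>
                 (\<Sum>k<N. maxnorm (\<lambda>i. g (d k) i - g (c k) i)) < e / 2"
    by (rule abs_cont_onE) blast
  have diff_le: "maxnorm (\<lambda>i. (f y i - g y i) - (f x i - g x i))
      \<le> maxnorm (\<lambda>i. f y i - f x i) + maxnorm (\<lambda>i. g y i - g x i)" for x y
  proof (rule maxnorm_leI)
    fix i
    show "\<bar>(f y i - g y i) - (f x i - g x i)\<bar>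
        \<le> maxnorm (\<lambda>i. f y i - f x i) + maxnorm (\<lambda>i. g y i - g x i)"
      using abs_le_maxnorm[of "\<lambda>i. f y i - f x i" i] abs_le_maxnorm[of "\<lambda>i. g y i - g x i" i]
      by linarith
  qed
  have sum_le: "(\<Sum>k<N. maxnorm (\<lambda>i. (f (d k) i - g (d k) i) - (f (c k) i - g (c k) i)))
      \<le> (\<Sum>k<N. maxnorm (\<lambda>i. f (d k) i - f (c k) i)) + (\<Sum>k<N. maxnorm (\<lambda>i. g (d k) i - g (c k) i))"
    for N :: nat and c d :: "nat \<Rightarrow> real"
    unfolding sum.distrib[symmetric] by (rule sum_mono) (rule diff_le)
  show "\<exists>\<delta>>0. \<forall>N c d. nonoverlapping_intervals a b N c d \<and> (\<Sum>k<N. d k - c k) < \<delta> \<longrightarrow>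
      (\<Sum>k<N. maxnorm (\<lambda>i. (f (d k) i - g (d k) i) - (f (c k) i - g (c k) i))) < e"
  proof (intro exI[of _ "min \<delta>1 \<delta>2"] conjI allI impI)
    show "0 < min \<delta>1 \<delta>2" using \<open>0 < \<delta>1\<close> \<open>0 < \<delta>2\<close> by simp
    fix N c d
    assume "nonoverlapping_intervals a b N c d \<and> (\<Sum>k<N. d k - c k) < min \<delta>1 \<delta>2"
    then show "(\<Sum>k<N. maxnorm (\<lambda>i. (f (d k) i - g (d k) i) - (f (c k) i - g (c k) i))) < e"
      using \<delta>1[of N c d] \<delta>2[of N c d] sum_le[where N=N and c=c and d=d] by simp
  qed
qed

lemma abs_cont_on_continuous_maxnorm:
  fixes f :: "real \<Rightarrow> 's::finite \<Rightarrow> real"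
  assumes ac: "abs_cont_on a b f"
  shows "continuous_on {a..b} (\<lambda>t. maxnorm (f t))"
  unfolding continuous_on_iff
proof (intro ballI allI impI)
  fix x e :: real assume x: "x \<in> {a..b}" and "0 < e"
  from ac \<open>0 < e\<close> obtain \<delta> where "0 < \<delta>" and \<delta>: "\<And>N c d. nonoverlapping_intervals a b N c d \<Longrightarrow>
    (\<Sum>k<N. d k - c k) < \<delta> \<Longrightarrow> (\<Sum>k<N. maxnorm (\<lambda>i. f (d k) i - f (c k) i)) < e"
    by (rule abs_cont_onE) blast
  have "dist (maxnorm (f y)) (maxnorm (f x)) < e" if y: "y \<in> {a..b}" "dist y x < \<delta>" for y
  proof -
    have "nonoverlapping_intervals a b (Suc 0) (\<lambda>_. min x y) (\<lambda>_. max x y)"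
      using x y unfolding nonoverlapping_intervals_def by auto
    then have "maxnorm (\<lambda>i. f (max x y) i - f (min x y) i) < e"
      using \<delta>[of "Suc 0" "\<lambda>_. min x y" "\<lambda>_. max x y"] y by (simp add: dist_real_def)
    then have "maxnorm (\<lambda>i. f y i - f x i) < e"
      using maxnorm_diff_commute[of "f x" "f y"] by (cases "x \<le> y") (simp_all add: max_def min_def)
    then show ?thesis
      using abs_maxnorm_diff_le[of "f y" "f x"] by (simp add: dist_real_def)
  qed
  then show "\<exists>\<delta>>0. \<forall>y\<in>{a..b}. dist y x < \<delta> \<longrightarrow> dist (maxnorm (f y)) (maxnorm (f x)) < e"
    using \<open>0 < \<delta>\<close> by blast
qed

lemma abs_cont_real_onE:
  assumes "abs_cont_real_on a b F" and "0 < e"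
  obtains \<delta> where "0 < \<delta>" and "\<And>N c d. nonoverlapping_intervals a b N c d \<Longrightarrow>
    (\<Sum>k<N. d k - c k) < \<delta> \<Longrightarrow> (\<Sum>k<N. \<bar>F (d k) - F (c k)\<bar>) < e"
proof -
  from assms(1)[unfolded abs_cont_real_on_def, rule_format, OF assms(2)]
  obtain \<delta> where "0 < \<delta>" and \<delta>: "\<forall>N c d. nonoverlapping_intervals a b N c d \<and>
      (\<Sum>k<N. d k - c k) < \<delta> \<longrightarrow> (\<Sum>k<N. \<bar>F (d k) - F (c k)\<bar>) < e"
    by blast
  show ?thesis
    by (rule that[OF \<open>0 < \<delta>\<close>]) (simp add: \<delta>)
qed

lemma abs_cont_real_on_finite_family:
  assumes ac: "abs_cont_real_on a b F" and "0 < e"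
  obtains \<delta> where "0 < \<delta>" and "\<And>(I :: 'a set) c d. finite I \<Longrightarrow>
    \<forall>k\<in>I. a \<le> c k \<and> c k \<le> d k \<and> d k \<le> b \<Longrightarrow>
    \<forall>k\<in>I. \<forall>l\<in>I. k \<noteq> l \<longrightarrow> d k \<le> c l \<or> d l \<le> c k \<Longrightarrow>
    (\<Sum>k\<in>I. d k - c k) < \<delta> \<Longrightarrow> (\<Sum>k\<in>I. \<bar>F (d k) - F (c k)\<bar>) < e"
proof -
  from ac \<open>0 < e\<close> obtain \<delta> where "0 < \<delta>" and \<delta>: "\<And>N c d. nonoverlapping_intervals a b N c d \<Longrightarrow>
    (\<Sum>k<N. d k - c k) < \<delta> \<Longrightarrow> (\<Sum>k<N. \<bar>F (d k) - F (c k)\<bar>) < e"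
    by (rule abs_cont_real_onE) blast
  show ?thesis
  proof (rule that[OF \<open>0 < \<delta>\<close>])
    fix I :: "'a set" and c d :: "'a \<Rightarrow> real"
    assume "finite I" and inside: "\<forall>k\<in>I. a \<le> c k \<and> c k \<le> d k \<and> d k \<le> b"
      and disjoint: "\<forall>k\<in>I. \<forall>l\<in>I. k \<noteq> l \<longrightarrow> d k \<le> c l \<or> d l \<le> c k"
      and small: "(\<Sum>k\<in>I. d k - c k) < \<delta>"
    obtain g where g: "bij_betw g {..<card I} I"
      using ex_bij_betw_nat_finite[OF \<open>finite I\<close>] by (metis lessThan_atLeast0)
    have reindex: "(\<Sum>k<card I. h (g k)) = (\<Sum>k\<in>I. h k)" for h :: "'a \<Rightarrow> real"
      by (rule sum.reindex_bij_betw[OF g])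
    have "g k \<in> I" if "k < card I" for k
      using bij_betwE[OF g] that by blast
    moreover have "g k \<noteq> g l" if "k < card I" "l < card I" "k \<noteq> l" for k l
      using g that unfolding bij_betw_def inj_on_def by auto
    ultimately have "nonoverlapping_intervals a b (card I) (c \<circ> g) (d \<circ> g)"
      using inside disjoint unfolding nonoverlapping_intervals_def by simp
    moreover have "(\<Sum>k<card I. (d \<circ> g) k - (c \<circ> g) k) < \<delta>"
      using small reindex[of "\<lambda>k. d k - c k"] by simp
    ultimately have "(\<Sum>k<card I. \<bar>F ((d \<circ> g) k) - F ((c \<circ> g) k)\<bar>) < e"
      by (rule \<delta>)
    then show "(\<Sum>k\<in>I. \<bar>F (d k) - F (c k)\<bar>) < e"
      using reindex[of "\<lambda>k. \<bar>F (d k) - F (c k)\<bar>"] by simp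
  qed
qed

lemma tagged_division_of_real_interval:
  assumes "p tagged_division_of {a..b::real}" and "(x, K) \<in> p"
  shows "K = {Inf K..Sup K}" and "a \<le> Inf K" and "Inf K \<le> x" and "x \<le> Sup K" and "Sup K \<le> b"
proof -
  obtain c d where K: "K = cbox c d" using tagged_division_ofD(4)[OF assms] by blast
  have "x \<in> K" "K \<subseteq> {a..b}" using tagged_division_ofD(2,3)[OF assms] by auto
  then have "c \<le> d" "Inf K = c" "Sup K = d" using K by auto
  with \<open>x \<in> K\<close> \<open>K \<subseteq> {a..b}\<close> K
  show "K = {Inf K..Sup K}" "a \<le> Inf K" "Inf K \<le> x" "x \<le> Sup K" "Sup K \<le> b" by auto
qed

lemma interior_disjoint_real_intervals:
  fixes c d c' d' :: real
  assumes "c < d" and "c' < d'" and "interior {c..d} \<inter> interior {c'..d'} = {}"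
  shows "d \<le> c' \<or> d' \<le> c"
proof (rule ccontr)
  assume "\<not> (d \<le> c' \<or> d' \<le> c)"
  then have "(max c c' + min d d') / 2 \<in> interior {c..d} \<inter> interior {c'..d'}"
    using assms(1,2) by auto
  with assms(3) show False by blast
qed

lemma tagged_division_nondegenerate_nonoverlapping:
  assumes p: "p tagged_division_of {a..b::real}" and "(x, K) \<in> p" and "(y, L) \<in> p"
    and "(x, K) \<noteq> (y, L)" and "Inf K < Sup K" and "Inf L < Sup L"
  shows "Sup K \<le> Inf L \<or> Sup L \<le> Inf K"
proof -
  have "interior K \<inter> interior L = {}"
    by (rule tagged_division_ofD(5)[OF p assms(2-4)])
  then have "interior {Inf K..Sup K} \<inter> interior {Inf L..Sup L} = {}"
    by (metis tagged_division_of_real_interval(1)[OF p assms(2)]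
        tagged_division_of_real_interval(1)[OF p assms(3)])
  with assms(5,6) show ?thesis
    by (rule interior_disjoint_real_intervals)
qed

lemma abs_cont_real_on_tagged_division:
  assumes ac: "abs_cont_real_on a b F" and "0 < e"
  obtains \<delta> where "0 < \<delta>" and "\<And>p q. p tagged_division_of {a..b} \<Longrightarrow> q \<subseteq> p \<Longrightarrow>
    (\<Sum>(x, K)\<in>q. Sup K - Inf K) < \<delta> \<Longrightarrow> (\<Sum>(x, K)\<in>q. \<bar>F (Sup K) - F (Inf K)\<bar>) < e"
proof -
  from ac \<open>0 < e\<close> obtain \<delta> where "0 < \<delta>" and \<delta>: "\<And>(I :: (real \<times> real set) set) c d. finite I \<Longrightarrow>
    \<forall>k\<in>I. a \<le> c k \<and> c k \<le> d k \<and> d k \<le> b \<Longrightarrow>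
    \<forall>k\<in>I. \<forall>l\<in>I. k \<noteq> l \<longrightarrow> d k \<le> c l \<or> d l \<le> c k \<Longrightarrow>
    (\<Sum>k\<in>I. d k - c k) < \<delta> \<Longrightarrow> (\<Sum>k\<in>I. \<bar>F (d k) - F (c k)\<bar>) < e"
    by (rule abs_cont_real_on_finite_family) blast
  show ?thesis
  proof (rule that[OF \<open>0 < \<delta>\<close>])
    fix p q
    assume p: "p tagged_division_of {a..b}" and "q \<subseteq> p"
      and small: "(\<Sum>(x, K)\<in>q. Sup K - Inf K) < \<delta>"
    define lo hi where "lo k = Inf (snd k)" and "hi k = Sup (snd k)" for k :: "real \<times> real set"
    have Kk: "a \<le> lo k" "lo k \<le> hi k" "hi k \<le> b" if "k \<in> p" for k
      using tagged_division_of_real_interval[OF p, of "fst k" "snd k"] that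
      unfolding lo_def hi_def by auto
    \<comment> \<open>degenerate intervals contribute nothing and may occur with several tags, so they are dropped\<close>
    define q' where "q' = {k \<in> q. lo k < hi k}"
    have "finite q" using p \<open>q \<subseteq> p\<close> finite_subset by blast
    have "q' \<subseteq> q" by (auto simp: q'_def)
    have "(\<Sum>k\<in>q'. hi k - lo k) \<le> (\<Sum>k\<in>q. hi k - lo k)"
      using \<open>q \<subseteq> p\<close> Kk(2) by (intro sum_mono2[OF \<open>finite q\<close> \<open>q' \<subseteq> q\<close>]) force
    also have "\<dots> < \<delta>"
      using small by (simp add: case_prod_unfold lo_def hi_def)
    finally have "(\<Sum>k\<in>q'. hi k - lo k) < \<delta>" .
    moreover have "\<forall>k\<in>q'. a \<le> lo k \<and> lo k \<le> hi k \<and> hi k \<le> b"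
      using \<open>q \<subseteq> p\<close> Kk unfolding q'_def by blast
    moreover have "\<forall>k\<in>q'. \<forall>l\<in>q'. k \<noteq> l \<longrightarrow> hi k \<le> lo l \<or> hi l \<le> lo k"
    proof (intro ballI impI)
      fix k l assume "k \<in> q'" "l \<in> q'" "k \<noteq> l"
      then show "hi k \<le> lo l \<or> hi l \<le> lo k"
        using tagged_division_nondegenerate_nonoverlapping[OF p, of "fst k" "snd k" "fst l" "snd l"]
          \<open>q \<subseteq> p\<close> by (auto simp: q'_def lo_def hi_def)
    qed
    ultimately have "(\<Sum>k\<in>q'. \<bar>F (hi k) - F (lo k)\<bar>) < e"
      using \<open>finite q\<close> \<open>q' \<subseteq> q\<close> by (intro \<delta>) (auto intro: finite_subset)
    moreover have "(\<Sum>k\<in>q. \<bar>F (hi k) - F (lo k)\<bar>) = (\<Sum>k\<in>q'. \<bar>F (hi k) - F (lo k)\<bar>)"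
      using \<open>q \<subseteq> p\<close> Kk(2)
      by (intro sum.mono_neutral_right[OF \<open>finite q\<close> \<open>q' \<subseteq> q\<close>]) (force simp: q'_def)
    ultimately show "(\<Sum>(x, K)\<in>q. \<bar>F (Sup K) - F (Inf K)\<bar>) < e"
      by (simp add: case_prod_unfold lo_def hi_def)
  qed
qed

section \<open>Monotonicity from an almost everywhere nonnegative derivative\<close>

lemma tagged_division_subset_length_le_measure:
  assumes p: "p tagged_division_of {a..b::real}" and "q \<subseteq> p" and "U \<in> lmeasurable"
    and inside: "\<And>x K. (x, K) \<in> q \<Longrightarrow> K \<subseteq> U"
  shows "(\<Sum>(x, K)\<in>q. Sup K - Inf K) \<le> measure lebesgue U"
proof -
  have q: "q tagged_partial_division_of {a..b}"
    using p \<open>q \<subseteq> p\<close> tagged_partial_division_subset unfolding tagged_division_of_def by blast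
  have len: "snd k = {Inf (snd k)..Sup (snd k)}" "Inf (snd k) \<le> Sup (snd k)"
    "measure lebesgue (snd k) = Sup (snd k) - Inf (snd k)" if "k \<in> q" for k
  proof -
    have "fst k \<in> snd k" "k \<in> p"
      using tagged_partial_division_ofD(2)[OF q, of "fst k" "snd k"] that \<open>q \<subseteq> p\<close> by auto
    then show K: "snd k = {Inf (snd k)..Sup (snd k)}" "Inf (snd k) \<le> Sup (snd k)"
      using tagged_division_of_real_interval[OF p, of "fst k" "snd k"] by auto
    have "measure lebesgue (snd k) = measure lebesgue {Inf (snd k)..Sup (snd k)}"
      using K(1) by (rule arg_cong)
    also have "\<dots> = Sup (snd k) - Inf (snd k)"
      using K(2) by simp
    finally show "measure lebesgue (snd k) = Sup (snd k) - Inf (snd k)" .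
  qed
  have "(\<Sum>(x, K)\<in>q. Sup K - Inf K) = (\<Sum>k\<in>q. measure lebesgue (snd k))"
    unfolding case_prod_unfold by (rule sum.cong[OF refl]) (simp add: len(3))
  also have "\<dots> = (\<Sum>K\<in>snd ` q. measure lebesgue K)"
  proof (rule sum.reindex_nontrivial[symmetric, unfolded comp_def])
    show "finite q" by (rule tagged_partial_division_ofD(1)[OF q])
    fix k l assume "k \<in> q" "l \<in> q" "k \<noteq> l" "snd k = snd l"
    \<comment> \<open>two tags sharing an interval force it to have empty interior\<close>
    have "interior (snd k) \<inter> interior (snd l) = {}"
      using tagged_partial_division_ofD(5)[OF q, of "fst k" "snd k" "fst l" "snd l"]
        \<open>k \<in> q\<close> \<open>l \<in> q\<close> \<open>k \<noteq> l\<close> by simp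
    with \<open>snd k = snd l\<close> have "interior (snd k) = {}" by simp
    then have "interior {Inf (snd k)..Sup (snd k)} = {}"
      using len(1)[OF \<open>k \<in> q\<close>] by metis
    then have "Sup (snd k) \<le> Inf (snd k)" by simp
    with len(2,3)[OF \<open>k \<in> q\<close>] show "measure lebesgue (snd k) = 0" by simp
  qed
  also have "\<dots> = measure lebesgue (\<Union>(snd ` q))"
    by (rule content_division[OF partial_division_of_tagged_division[OF q]])
  also have "\<dots> \<le> measure lebesgue U"
  proof (rule measure_mono_fmeasurable)
    show "\<Union>(snd ` q) \<subseteq> U" using inside by force
    show "\<Union>(snd ` q) \<in> sets lebesgue"
      using lmeasurable_division[OF partial_division_of_tagged_division[OF q]] by blast
  qed (rule \<open>U \<in> lmeasurable\<close>)
  finally show ?thesis .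
qed

lemma null_set_open_cover:
  assumes "N \<in> null_sets lborel" and "0 < \<delta>"
  obtains U where "open U" "N \<subseteq> U" "U \<in> lmeasurable" "measure lebesgue U < \<delta>"
proof -
  have "negligible N"
    using assms(1) by (simp add: negligible_iff_null_sets null_sets_completionI)
  then have "N \<in> lmeasurable" "measure lebesgue N = 0"
    by (simp_all add: negligible_imp_measurable negligible_imp_measure0)
  obtain U where U: "open U" "N \<subseteq> U" "U - N \<in> lmeasurable" "emeasure lebesgue (U - N) < ennreal \<delta>"
    using sets_lebesgue_outer_open[OF fmeasurableD[OF \<open>N \<in> lmeasurable\<close>] assms(2)] by blast
  have "U = (U - N) \<union> N" using U(2) by blast
  then have "U \<in> lmeasurable" "measure lebesgue U \<le> measure lebesgue (U - N) + measure lebesgue N"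
    using U(3) \<open>N \<in> lmeasurable\<close> by (metis fmeasurable.Un, metis measure_Un_le fmeasurableD)
  moreover have "measure lebesgue (U - N) < \<delta>"
    using U(3,4) assms(2) by (simp add: emeasure_eq_measure2 ennreal_less_iff)
  ultimately show ?thesis
    using that U(1,2) \<open>measure lebesgue N = 0\<close> by fastforce
qed

lemma nonneg_derivative_straddle:
  fixes G :: "real \<Rightarrow> real"
  assumes "(G has_real_derivative D) (at x within S)" and "0 \<le> D" and "0 < e"
  obtains r where "0 < r"
    and "\<And>c d. c \<in> S \<Longrightarrow> d \<in> S \<Longrightarrow> c \<le> x \<Longrightarrow> x \<le> d \<Longrightarrow> {c..d} \<subseteq> ball x r \<Longrightarrow>
           G c - G d \<le> e * (d - c)"
proof -
  from assms(1,3) obtain r where "0 < r"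
    and r: "\<And>y. y \<in> S \<Longrightarrow> \<bar>y - x\<bar> < r \<Longrightarrow> \<bar>G y - G x - D * (y - x)\<bar> \<le> e * \<bar>y - x\<bar>"
    unfolding has_field_derivative_def has_derivative_within_alt by (auto simp: real_norm_def)
  show ?thesis
  proof (rule that[OF \<open>0 < r\<close>])
    fix c d assume "c \<in> S" "d \<in> S" "c \<le> x" "x \<le> d" "{c..d} \<subseteq> ball x r"
    moreover have "c \<in> {c..d}" "d \<in> {c..d}" using \<open>c \<le> x\<close> \<open>x \<le> d\<close> by auto
    ultimately have "c \<in> ball x r" "d \<in> ball x r" by blast+
    then have "\<bar>c - x\<bar> < r" "\<bar>d - x\<bar> < r"
      by (simp_all add: dist_real_def abs_minus_commute)
    then have "\<bar>G c - G x - D * (c - x)\<bar> \<le> e * (x - c)" "\<bar>G d - G x - D * (d - x)\<bar> \<le> e * (d - x)"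
      using r[OF \<open>c \<in> S\<close>] r[OF \<open>d \<in> S\<close>] \<open>c \<le> x\<close> \<open>x \<le> d\<close> by simp_all
    moreover have "D * (c - x) \<le> 0" "0 \<le> D * (d - x)"
      using \<open>0 \<le> D\<close> \<open>c \<le> x\<close> \<open>x \<le> d\<close> by (simp_all add: mult_nonneg_nonpos)
    ultimately show "G c - G d \<le> e * (d - c)"
      by (simp add: abs_le_iff algebra_simps)
  qed
qed

lemma tagged_division_sum_increments_ge:
  fixes G :: "real \<Rightarrow> real"
  assumes "a \<le> b" and p: "p tagged_division_of {a..b}" and "q \<subseteq> p" and "0 \<le> e"
    and incr: "\<And>x K. (x, K) \<in> q \<Longrightarrow> - e * (Sup K - Inf K) \<le> G (Sup K) - G (Inf K)"
  shows "- e * (b - a) \<le> (\<Sum>(x, K)\<in>q. G (Sup K) - G (Inf K))"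
proof -
  have "(\<Sum>(x, K)\<in>q. Sup K - Inf K) \<le> (\<Sum>(x, K)\<in>p. Sup K - Inf K)"
  proof (rule sum_mono2)
    show "finite p" using p by blast
    show "0 \<le> (case k of (x, K) \<Rightarrow> Sup K - Inf K)" if "k \<in> p - q" for k
      using tagged_division_of_real_interval[OF p, of "fst k" "snd k"] that
      by (simp add: case_prod_unfold)
  qed (rule \<open>q \<subseteq> p\<close>)
  also have "\<dots> = b - a"
    using additive_tagged_division_1[OF \<open>a \<le> b\<close> p, of "\<lambda>x. x"] by simp
  finally have "- e * (b - a) \<le> - e * (\<Sum>(x, K)\<in>q. Sup K - Inf K)"
    using \<open>0 \<le> e\<close> by (simp add: mult_left_mono)
  also have "\<dots> = (\<Sum>(x, K)\<in>q. - e * (Sup K - Inf K))"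
    by (simp add: sum_distrib_left case_prod_unfold)
  also have "\<dots> \<le> (\<Sum>(x, K)\<in>q. G (Sup K) - G (Inf K))"
  proof (rule sum_mono)
    fix k assume "k \<in> q"
    then show "(case k of (x, K) \<Rightarrow> - e * (Sup K - Inf K))
        \<le> (case k of (x, K) \<Rightarrow> G (Sup K) - G (Inf K))"
      using incr[of "fst k" "snd k"] by (simp add: case_prod_unfold)
  qed
  finally show ?thesis .
qed

lemma nonneg_derivative_fine_division:
  fixes G :: "real \<Rightarrow> real"
  assumes good: "\<And>t. t \<in> {a..b} - N \<Longrightarrow> \<exists>D\<ge>0. (G has_real_derivative D) (at t within {a..b})"
    and "open U" and "N \<subseteq> U" and "0 < e"
  obtains p where "p tagged_division_of {a..b}"
    and "\<And>x K. (x, K) \<in> p \<Longrightarrow> x \<notin> N \<Longrightarrow> - e * (Sup K - Inf K) \<le> G (Sup K) - G (Inf K)"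
    and "\<And>x K. (x, K) \<in> p \<Longrightarrow> x \<in> N \<Longrightarrow> K \<subseteq> U"
proof -
  have "\<exists>r>0. (x \<in> {a..b} - N \<longrightarrow> (\<forall>c d. c \<in> {a..b} \<longrightarrow> d \<in> {a..b} \<longrightarrow> c \<le> x \<longrightarrow> x \<le> d \<longrightarrow>
                 {c..d} \<subseteq> ball x r \<longrightarrow> G c - G d \<le> e * (d - c)))
            \<and> (x \<in> N \<longrightarrow> ball x r \<subseteq> U)" for x
  proof (cases "x \<in> {a..b} - N")
    case True
    with good obtain D where "0 \<le> D" "(G has_real_derivative D) (at x within {a..b})" by blast
    with \<open>0 < e\<close> obtain r where "0 < r" "\<And>c d. c \<in> {a..b} \<Longrightarrow> d \<in> {a..b} \<Longrightarrow> c \<le> x \<Longrightarrow> x \<le> d \<Longrightarrow>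
        {c..d} \<subseteq> ball x r \<Longrightarrow> G c - G d \<le> e * (d - c)"
      by (metis nonneg_derivative_straddle)
    with True show ?thesis by blast
  next
    case False
    show ?thesis
    proof (cases "x \<in> N")
      case True
      with \<open>open U\<close> \<open>N \<subseteq> U\<close> obtain r where "0 < r" "ball x r \<subseteq> U"
        by (meson open_contains_ball subsetD)
      with False show ?thesis by blast
    qed (use False in \<open>auto intro: exI[of _ 1]\<close>)
  qed
  then obtain r where r_pos: "\<And>x. 0 < r x"
    and r_good: "\<And>x c d. x \<in> {a..b} - N \<Longrightarrow> c \<in> {a..b} \<Longrightarrow> d \<in> {a..b} \<Longrightarrow> c \<le> x \<Longrightarrow> x \<le> d \<Longrightarrow>
                  {c..d} \<subseteq> ball x (r x) \<Longrightarrow> G c - G d \<le> e * (d - c)"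
    and r_bad: "\<And>x. x \<in> N \<Longrightarrow> ball x (r x) \<subseteq> U"
    by metis
  obtain p where p: "p tagged_division_of {a..b}" and fine: "(\<lambda>x. ball x (r x)) fine p"
    using fine_division_exists_real[OF gauge_ball_dependent] r_pos by blast
  show ?thesis
  proof (rule that[OF p])
    fix x K assume "(x, K) \<in> p"
    then have "K \<subseteq> ball x (r x)" using fine unfolding fine_def by blast
    note K = tagged_division_of_real_interval[OF p \<open>(x, K) \<in> p\<close>] this
    show "- e * (Sup K - Inf K) \<le> G (Sup K) - G (Inf K)" if "x \<notin> N"
      using r_good[of x "Inf K" "Sup K"] K that by force
    show "K \<subseteq> U" if "x \<in> N"
      using r_bad[OF that] K(6) by blast
  qed
qed

lemma tagged_division_sum_increments_gt:
  fixes F P :: "real \<Rightarrow> real"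
  assumes p: "p tagged_division_of {a..b}" and "q \<subseteq> p" and P: "mono_on {a..b} P"
    and small: "(\<Sum>(x, K)\<in>q. \<bar>F (Sup K) - F (Inf K)\<bar>) < e"
  shows "- e < (\<Sum>(x, K)\<in>q. (F (Sup K) + P (Sup K)) - (F (Inf K) + P (Inf K)))"
proof -
  have "- \<bar>F (Sup K) - F (Inf K)\<bar> \<le> (F (Sup K) + P (Sup K)) - (F (Inf K) + P (Inf K))"
    if "(x, K) \<in> q" for x K
    using tagged_division_of_real_interval[OF p, of x K] that \<open>q \<subseteq> p\<close>
      mono_onD[OF P, of "Inf K" "Sup K"]
    by auto
  then have "(\<Sum>(x, K)\<in>q. - \<bar>F (Sup K) - F (Inf K)\<bar>)
      \<le> (\<Sum>(x, K)\<in>q. (F (Sup K) + P (Sup K)) - (F (Inf K) + P (Inf K)))"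
    by (intro sum_mono) (auto simp: case_prod_unfold)
  with small show ?thesis
    by (simp add: sum_negf case_prod_unfold)
qed

lemma abs_cont_plus_mono_approx:
  fixes F P :: "real \<Rightarrow> real"
  assumes "a \<le> b" and ac: "abs_cont_real_on a b F" and P: "mono_on {a..b} P"
    and "N \<in> null_sets lborel"
    and good: "\<And>t. t \<in> {a..b} - N \<Longrightarrow>
      \<exists>D\<ge>0. ((\<lambda>s. F s + P s) has_real_derivative D) (at t within {a..b})"
    and "0 < e"
  shows "(F a + P a) - e * (b - a + 1) \<le> F b + P b"
proof -
  define G where "G = (\<lambda>s. F s + P s)"
  from ac \<open>0 < e\<close> obtain \<delta> where "0 < \<delta>" and \<delta>: "\<And>p q. p tagged_division_of {a..b} \<Longrightarrow> q \<subseteq> p \<Longrightarrow>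
    (\<Sum>(x, K)\<in>q. Sup K - Inf K) < \<delta> \<Longrightarrow> (\<Sum>(x, K)\<in>q. \<bar>F (Sup K) - F (Inf K)\<bar>) < e"
    by (rule abs_cont_real_on_tagged_division) blast
  from \<open>N \<in> null_sets lborel\<close> \<open>0 < \<delta>\<close> obtain U
    where "open U" "N \<subseteq> U" "U \<in> lmeasurable" "measure lebesgue U < \<delta>"
    by (rule null_set_open_cover)
  obtain p where p: "p tagged_division_of {a..b}"
    and tag_good: "\<And>x K. (x, K) \<in> p \<Longrightarrow> x \<notin> N \<Longrightarrow> - e * (Sup K - Inf K) \<le> G (Sup K) - G (Inf K)"
    and tag_bad: "\<And>x K. (x, K) \<in> p \<Longrightarrow> x \<in> N \<Longrightarrow> K \<subseteq> U"
    using nonneg_derivative_fine_division[OF good[folded G_def] \<open>open U\<close> \<open>N \<subseteq> U\<close> \<open>0 < e\<close>] by blast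
  define pN where "pN = {(x, K) \<in> p. x \<in> N}"
  have "pN \<subseteq> p" "p - pN \<subseteq> p" by (auto simp: pN_def)
  have "- e * (b - a) \<le> (\<Sum>(x, K)\<in>p - pN. G (Sup K) - G (Inf K))"
    using \<open>0 < e\<close> tag_good
    by (intro tagged_division_sum_increments_ge[OF \<open>a \<le> b\<close> p \<open>p - pN \<subseteq> p\<close>]) (auto simp: pN_def)
  moreover have "- e < (\<Sum>(x, K)\<in>pN. G (Sup K) - G (Inf K))"
  proof -
    have "(\<Sum>(x, K)\<in>pN. Sup K - Inf K) \<le> measure lebesgue U"
      using tag_bad
      by (intro tagged_division_subset_length_le_measure[OF p \<open>pN \<subseteq> p\<close> \<open>U \<in> lmeasurable\<close>])
         (auto simp: pN_def)
    then have "(\<Sum>(x, K)\<in>pN. \<bar>F (Sup K) - F (Inf K)\<bar>) < e"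
      using \<delta>[OF p \<open>pN \<subseteq> p\<close>] \<open>measure lebesgue U < \<delta>\<close> by linarith
    then show ?thesis
      unfolding G_def by (rule tagged_division_sum_increments_gt[OF p \<open>pN \<subseteq> p\<close> P])
  qed
  moreover have "G b - G a = (\<Sum>(x, K)\<in>p. G (Sup K) - G (Inf K))"
    using additive_tagged_division_1[OF \<open>a \<le> b\<close> p, of G] by simp
  moreover have "\<dots> = (\<Sum>(x, K)\<in>p - pN. G (Sup K) - G (Inf K)) + (\<Sum>(x, K)\<in>pN. G (Sup K) - G (Inf K))"
    using \<open>pN \<subseteq> p\<close> p by (intro sum.subset_diff) blast+
  ultimately show ?thesis
    unfolding G_def by (simp add: algebra_simps)
qed

lemma abs_cont_plus_mono_le:
  fixes F P :: "real \<Rightarrow> real"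
  assumes "a \<le> b" and ac: "abs_cont_real_on a b F" and P: "mono_on {a..b} P"
    and deriv: "AE t in lborel. t \<in> {a..b} \<longrightarrow>
      (\<exists>D\<ge>0. ((\<lambda>s. F s + P s) has_real_derivative D) (at t within {a..b}))"
  shows "F a + P a \<le> F b + P b"
proof (rule field_le_epsilon)
  from deriv obtain N where "N \<in> null_sets lborel" and good: "\<And>t. t \<in> {a..b} - N \<Longrightarrow>
      \<exists>D\<ge>0. ((\<lambda>s. F s + P s) has_real_derivative D) (at t within {a..b})"
    by (rule AE_E3) auto
  fix e :: real assume "0 < e"
  have "0 < b - a + 1" using \<open>a \<le> b\<close> by simp
  with \<open>0 < e\<close> have "0 < e / (b - a + 1)" by simp
  from abs_cont_plus_mono_approx[OF \<open>a \<le> b\<close> ac P \<open>N \<in> null_sets lborel\<close> good this]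
  show "F a + P a \<le> F b + P b + e"
    using \<open>0 < b - a + 1\<close> by simp
qed

section \<open>A backward Gronwall inequality\<close>

lemma abs_cont_on_component_le_supersolution:
  fixes f :: "real \<Rightarrow> 's::finite \<Rightarrow> real" and \<phi> \<phi>' :: "real \<Rightarrow> real"
  assumes "a \<le> s" and "s \<le> T" and ac: "abs_cont_on a T f"
    and deriv: "AE t in lborel. t \<in> {a..T} \<longrightarrow> (\<forall>i. \<exists>D. ((\<lambda>s. f s i) has_real_derivative D)
                  (at t within {a..T}) \<and> \<bar>D\<bar> \<le> \<alpha> + K * maxnorm (f t))"
    and "0 \<le> K"
    and \<phi>_deriv: "\<And>t. (\<phi> has_real_derivative \<phi>' t) (at t)"
    and \<phi>'_le: "\<And>t. t \<in> {a..T} \<Longrightarrow> \<phi>' t \<le> - \<alpha> - K * \<phi> t"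
    and \<phi>_anti: "antimono_on {a..T} \<phi>"
    and below: "\<And>t. t \<in> {s<..T} \<Longrightarrow> maxnorm (f t) \<le> \<phi> t"
    and "\<bar>\<sigma>\<bar> \<le> 1"
  shows "\<sigma> * f s i - \<phi> s \<le> \<sigma> * f T i - \<phi> T"
proof -
  have "\<sigma> * f s i + - \<phi> s \<le> \<sigma> * f T i + - \<phi> T"
  proof (rule abs_cont_plus_mono_le)
    show "abs_cont_real_on s T (\<lambda>t. \<sigma> * f t i)"
      by (rule abs_cont_on_component[OF ac \<open>a \<le> s\<close> \<open>\<bar>\<sigma>\<bar> \<le> 1\<close>])
    show "mono_on {s..T} (\<lambda>t. - \<phi> t)"
      using \<phi>_anti \<open>a \<le> s\<close> by (intro mono_onI) (simp add: monotone_on_def)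
    show "AE t in lborel. t \<in> {s..T} \<longrightarrow>
        (\<exists>D\<ge>0. ((\<lambda>t. \<sigma> * f t i + - \<phi> t) has_real_derivative D) (at t within {s..T}))"
      using AE_lborel_singleton[of s] deriv
    proof eventually_elim
      case (elim t)
      show ?case
      proof
        assume "t \<in> {s..T}"
        with elim(1) \<open>a \<le> s\<close> have "t \<in> {a..T}" "t \<in> {s<..T}" by auto
        with elim(2) obtain D where D: "((\<lambda>s. f s i) has_real_derivative D) (at t within {a..T})"
          and "\<bar>D\<bar> \<le> \<alpha> + K * maxnorm (f t)" by blast
        have hasD: "((\<lambda>t. \<sigma> * f t i + - \<phi> t) has_real_derivative \<sigma> * D + - \<phi>' t)
            (at t within {s..T})"
          using DERIV_subset[OF D] has_field_derivative_at_within[OF \<phi>_deriv] \<open>a \<le> s\<close>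
          by (intro DERIV_add DERIV_cmult DERIV_minus) auto
        have "K * maxnorm (f t) \<le> K * \<phi> t"
          using below[OF \<open>t \<in> {s<..T}\<close>] \<open>0 \<le> K\<close> by (rule mult_left_mono)
        moreover have "\<bar>\<sigma> * D\<bar> \<le> \<bar>D\<bar>"
          using \<open>\<bar>\<sigma>\<bar> \<le> 1\<close> by (simp add: abs_mult mult_left_le_one_le)
        ultimately have "0 \<le> \<sigma> * D + - \<phi>' t"
          using \<phi>'_le[OF \<open>t \<in> {a..T}\<close>] \<open>\<bar>D\<bar> \<le> \<alpha> + K * maxnorm (f t)\<close> abs_ge_minus_self[of "\<sigma> * D"]
          by linarith
        with hasD show "\<exists>D\<ge>0. ((\<lambda>t. \<sigma> * f t i + - \<phi> t) has_real_derivative D) (at t within {s..T})"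
          by blast
      qed
    qed
  qed (use \<open>s \<le> T\<close> in simp)
  then show ?thesis by simp
qed

lemma abs_cont_on_maxnorm_lt_supersolution:
  fixes f :: "real \<Rightarrow> 's::finite \<Rightarrow> real" and \<phi> \<phi>' :: "real \<Rightarrow> real"
  assumes ac: "abs_cont_on a T f"
    and deriv: "AE t in lborel. t \<in> {a..T} \<longrightarrow> (\<forall>i. \<exists>D. ((\<lambda>s. f s i) has_real_derivative D)
                  (at t within {a..T}) \<and> \<bar>D\<bar> \<le> \<alpha> + K * maxnorm (f t))"
    and "0 \<le> K"
    and \<phi>_deriv: "\<And>t. (\<phi> has_real_derivative \<phi>' t) (at t)"
    and \<phi>'_le: "\<And>t. t \<in> {a..T} \<Longrightarrow> \<phi>' t \<le> - \<alpha> - K * \<phi> t"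
    and \<phi>_anti: "antimono_on {a..T} \<phi>"
    and terminal: "maxnorm (f T) < \<phi> T"
    and "t \<in> {a..T}"
  shows "maxnorm (f t) < \<phi> t"
proof (rule ccontr)
  \<comment> \<open>look at the last time \<open>s\<close> where \<open>\<phi>\<close> fails to dominate\<close>
  define S where "S = {a..T} \<inter> (\<lambda>t. maxnorm (f t) - \<phi> t) -` {0..}"
  assume "\<not> maxnorm (f t) < \<phi> t"
  with \<open>t \<in> {a..T}\<close> have "t \<in> S" by (simp add: S_def)
  have "continuous_on {a..T} (\<lambda>t. maxnorm (f t) - \<phi> t)"
    using abs_cont_on_continuous_maxnorm[OF ac] has_real_derivative_imp_continuous_on[OF \<phi>_deriv]
    by (intro continuous_on_diff) auto
  then have "closed S" unfolding S_def by (rule continuous_closed_preimage) auto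
  moreover have "bdd_above S" unfolding S_def by (rule bdd_aboveI[of _ T]) auto
  ultimately have "Sup S \<in> S" using \<open>t \<in> S\<close> closed_contains_Sup by blast
  define s where "s = Sup S"
  have "s \<in> {a..T}" "\<phi> s \<le> maxnorm (f s)" using \<open>Sup S \<in> S\<close> by (auto simp: S_def s_def)
  have below: "maxnorm (f t) \<le> \<phi> t" if "t \<in> {s<..T}" for t
  proof (rule ccontr)
    assume "\<not> maxnorm (f t) \<le> \<phi> t"
    with that \<open>s \<in> {a..T}\<close> have "t \<in> S" by (auto simp: S_def)
    then have "t \<le> s" using \<open>bdd_above S\<close> unfolding s_def by (rule cSup_upper)
    with that show False by simp
  qed
  have "\<bar>f s i\<bar> \<le> \<phi> s - (\<phi> T - maxnorm (f T))" for i
  proof -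
    have "\<sigma> * f s i - \<phi> s \<le> \<sigma> * f T i - \<phi> T" if "\<bar>\<sigma>\<bar> \<le> 1" for \<sigma>
      using \<open>s \<in> {a..T}\<close> ac deriv \<open>0 \<le> K\<close> \<phi>_deriv \<phi>'_le \<phi>_anti below that
      by (intro abs_cont_on_component_le_supersolution) auto
    from this[of 1] this[of "-1"] show ?thesis
      using abs_le_maxnorm[of "f T" i] by (simp add: abs_le_iff)
  qed
  then have "maxnorm (f s) \<le> \<phi> s - (\<phi> T - maxnorm (f T))"
    by (rule maxnorm_leI)
  with terminal \<open>\<phi> s \<le> maxnorm (f s)\<close> show False by simp
qed

lemma abs_cont_on_maxnorm_gronwall:
  fixes f :: "real \<Rightarrow> 's::finite \<Rightarrow> real"
  assumes ac: "abs_cont_on a T f"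
    and deriv: "AE t in lborel. t \<in> {a..T} \<longrightarrow> (\<forall>i. \<exists>D. ((\<lambda>s. f s i) has_real_derivative D)
                  (at t within {a..T}) \<and> \<bar>D\<bar> \<le> \<alpha> + K * maxnorm (f t))"
    and "0 \<le> \<alpha>" and "0 \<le> K" and terminal: "maxnorm (f T) \<le> c" and "t \<in> {a..T}"
  shows "maxnorm (f t) \<le> (c + \<alpha> * (T - t)) * exp (K * (T - t))"
proof (rule field_le_epsilon)
  fix e :: real assume "0 < e"
  have "0 \<le> c" using terminal maxnorm_nonneg[of "f T"] by linarith
  \<comment> \<open>the Gronwall bound with \<open>c\<close> and \<open>\<alpha>\<close> enlarged by \<open>e\<close> is a strict supersolution\<close>
  define \<phi> where "\<phi> e s = (c + e + (\<alpha> + e) * (T - s)) * exp (K * (T - s))" for e s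
  define B where "B = (1 + (T - t)) * exp (K * (T - t))"
  have "0 < B" using \<open>t \<in> {a..T}\<close> by (simp add: B_def)
  then have "0 < e / B" using \<open>0 < e\<close> by simp
  have lt: "maxnorm (f t) < \<phi> (e / B) t"
  proof (rule abs_cont_on_maxnorm_lt_supersolution[OF ac deriv \<open>0 \<le> K\<close> _ _ _ _ \<open>t \<in> {a..T}\<close>])
    show "(\<phi> (e / B) has_real_derivative
        - ((\<alpha> + e / B) * exp (K * (T - s))) - K * \<phi> (e / B) s) (at s)" for s
      unfolding \<phi>_def by (rule derivative_eq_intros refl | simp add: algebra_simps)+
    show "- ((\<alpha> + e / B) * exp (K * (T - s))) - K * \<phi> (e / B) s \<le> - \<alpha> - K * \<phi> (e / B) s"
      if "s \<in> {a..T}" for s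
    proof -
      have "1 \<le> exp (K * (T - s))" using that \<open>0 \<le> K\<close> by simp
      then have "\<alpha> + e / B \<le> (\<alpha> + e / B) * exp (K * (T - s))"
        using \<open>0 \<le> \<alpha>\<close> \<open>0 < e / B\<close> by (simp add: mult_le_cancel_left1)
      then have "- ((\<alpha> + e / B) * exp (K * (T - s))) \<le> - \<alpha>" using \<open>0 < e / B\<close> by linarith
      then show ?thesis by linarith
    qed
    show "antimono_on {a..T} (\<phi> (e / B))"
      unfolding monotone_on_def \<phi>_def
      using \<open>0 \<le> c\<close> \<open>0 \<le> \<alpha>\<close> \<open>0 < e / B\<close> \<open>0 \<le> K\<close>
      by (auto intro!: mult_mono add_mono mult_left_mono)
    show "maxnorm (f T) < \<phi> (e / B) T"
      using terminal \<open>0 < e / B\<close> by (simp add: \<phi>_def)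
  qed
  have "\<phi> d t = (c + \<alpha> * (T - t)) * exp (K * (T - t)) + d * B" for d
    unfolding \<phi>_def B_def by (simp add: algebra_simps)
  with lt \<open>0 < B\<close> show "maxnorm (f t) \<le> (c + \<alpha> * (T - t)) * exp (K * (T - t)) + e"
    by simp
qed

section \<open>Histories and the time domain\<close>

lemma Z_eqI:
  assumes len: "length u = n" and k: "k \<le> n" and pos: "\<forall>i<k. 0 \<le> u ! i"
    and neg: "\<forall>i. k \<le> i \<and> i < n \<longrightarrow> u ! i = -1"
  shows "Z u = k"
proof -
  have f1: "filter (\<lambda>x. x \<noteq> -1) (take k u) = take k u"
  proof (rule filter_True)
    show "\<forall>x\<in>set (take k u). x \<noteq> - 1"
    proof
      fix x assume "x \<in> set (take k u)"
      then obtain i where "i < length (take k u)" "x = take k u ! i" by (auto simp: in_set_conv_nth)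
      then have "i < k" "x = u ! i" using len k by auto
      then show "x \<noteq> -1" using pos by force
    qed
  qed
  have f2: "filter (\<lambda>x. x \<noteq> -1) (drop k u) = []"
  proof (rule filter_False)
    show "\<forall>x\<in>set (drop k u). \<not> x \<noteq> - 1"
    proof
      fix x assume "x \<in> set (drop k u)"
      then obtain i where "i < length (drop k u)" "x = drop k u ! i" by (auto simp: in_set_conv_nth)
      then have "k + i < n" "x = u ! (k + i)" using len k by auto
      then show "\<not> x \<noteq> -1" using neg by auto
    qed
  qed
  have "filter (\<lambda>x. x \<noteq> -1) u = filter (\<lambda>x. x \<noteq> -1) (take k u) @ filter (\<lambda>x. x \<noteq> -1) (drop k u)"
    by (metis append_take_drop_id filter_append)
  then have "Z u = length (take k u)" unfolding Z_def using f1 f2 by simp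
  then show ?thesis using len k by simp
qed

lemma UsetD:
  assumes "u \<in> Uset n T"
  shows "length u = n" "Z u \<le> n" "\<forall>i<Z u. 0 \<le> u ! i" "sorted (take (Z u) u)"
    "\<forall>i. Z u \<le> i \<and> i < n \<longrightarrow> u ! i = -1" "\<forall>x\<in>set u. x = -1 \<or> (0 \<le> x \<and> x \<le> T)"
proof -
  obtain k where k: "k \<le> n" "\<forall>i<k. 0 \<le> u ! i" "sorted (take k u)" "\<forall>i. k \<le> i \<and> i < n \<longrightarrow> u ! i = -1"
    and len: "length u = n" and el: "\<forall>x\<in>set u. x = -1 \<or> (0 \<le> x \<and> x \<le> T)"
    using assms unfolding Uset_def by blast
  have "Z u = k" using Z_eqI[OF len k(1,2,4)] .
  then show "length u = n" "Z u \<le> n" "\<forall>i<Z u. 0 \<le> u ! i" "sorted (take (Z u) u)"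
    "\<forall>i. Z u \<le> i \<and> i < n \<longrightarrow> u ! i = -1" "\<forall>x\<in>set u. x = -1 \<or> (0 \<le> x \<and> x \<le> T)"
    using k len el by auto
qed

lemma tstart_ge: "0 \<le> tstart u" "x \<in> set u \<Longrightarrow> x \<le> tstart u"
  unfolding tstart_def by (auto intro: Max_ge)

lemma tstart_le:
  assumes "u \<in> Uset n T" "0 \<le> T"
  shows "tstart u \<le> T"
proof -
  have "\<forall>x\<in>set u. x \<le> T" using UsetD(6)[OF assms(1)] assms(2) by force
  then show ?thesis unfolding tstart_def using assms(2) by (subst Max_le_iff) auto
qed

lemma TS_D:
  assumes "(t, u) \<in> TS n T"
  shows "t \<in> {0..T}" and "u \<in> Uset n T"
  using assms unfolding TS_def by auto

lemma mem_TS_iff: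
  "(t,u) \<in> TS n T \<longleftrightarrow> u \<in> Uset n T \<and> tstart u \<le> t \<and> t \<le> T"
proof
  assume "(t,u) \<in> TS n T"
  then have "u \<in> Uset n T" "0 \<le> t" "t \<le> T" "\<forall>x\<in>set u. x \<le> t" unfolding TS_def by auto
  moreover have "tstart u \<le> t" unfolding tstart_def using calculation by (subst Max_le_iff) auto
  ultimately show "u \<in> Uset n T \<and> tstart u \<le> t \<and> t \<le> T" by blast
next
  assume A: "u \<in> Uset n T \<and> tstart u \<le> t \<and> t \<le> T"
  then have "0 \<le> t" "\<forall>x\<in>set u. x \<le> t" using tstart_ge(1)[of u] tstart_ge(2)[of _ u] by force+
  then show "(t,u) \<in> TS n T" using A unfolding TS_def by auto
qed

lemma push_mem_TS:
  assumes tu: "(t,u) \<in> TS n T" and Zn: "Z u < n"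
  shows "(t, push u t) \<in> TS n T" "Z (push u t) = Z u + 1"
proof -
  have U: "u \<in> Uset n T" and t: "0 \<le> t" "t \<le> T" and ut: "\<forall>x\<in>set u. x \<le> t"
    using tu unfolding TS_def by auto
  define k where "k = Z u"
  note Uk = UsetD[OF U, folded k_def]
  define w where "w = push u t"
  have w: "w = u[k := t]" unfolding w_def push_def k_def ..
  have lw: "length w = n" using Uk(1) w by simp
  have kn: "k < n" using Zn k_def by simp
  have wk: "w ! i = (if i = k then t else u ! i)" if "i < n" for i
    using that Uk(1) w by (simp add: nth_list_update)
  have pos: "\<forall>i<k+1. 0 \<le> w ! i" using wk Uk(3) t kn by auto
  have neg: "\<forall>i. k+1 \<le> i \<and> i < n \<longrightarrow> w ! i = -1" using wk Uk(5) by auto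
  have Zw: "Z w = k + 1" using Z_eqI[OF lw _ pos neg] kn by simp
  have tk: "take (k+1) w = take k u @ [t]"
    using kn Uk(1) unfolding w by (simp add: take_Suc_conv_app_nth take_update_cancel)
  have "set (take k u) \<subseteq> set u" by (rule set_take_subset)
  then have srt: "sorted (take (k+1) w)" unfolding tk using Uk(4) ut by (auto simp: sorted_append)
  have setw: "set w \<subseteq> insert t (set u)" unfolding w by (rule set_update_subset_insert)
  have el: "\<forall>x\<in>set w. x = -1 \<or> (0 \<le> x \<and> x \<le> T)" using setw Uk(6) t by blast
  have wU: "w \<in> Uset n T" unfolding Uset_def using lw el pos srt neg kn
    by (intro CollectI conjI exI[of _ "k+1"]) auto
  have "\<forall>x\<in>set w. x \<le> t" using setw ut by auto
  then show "(t, push u t) \<in> TS n T" using wU t unfolding TS_def w_def by auto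
  show "Z (push u t) = Z u + 1" using Zw unfolding w_def k_def .
qed

lemma replicate_mem_TS:
  assumes "0 \<le> T"
  shows "(0, replicate n (-1)) \<in> TS n T"
  unfolding TS_def Uset_def using assms by (auto intro!: exI[of _ 0])

section \<open>Two solutions of the backward equation\<close>

locale solution_pair =
  fixes n :: nat and T :: real and A :: "'b set"
    and lam :: "nat \<Rightarrow> real \<Rightarrow> ('s::finite \<Rightarrow> real) \<Rightarrow> real"
    and Q :: "real \<Rightarrow> nat \<Rightarrow> ('s \<Rightarrow> real) \<Rightarrow> 'b \<Rightarrow> 's \<Rightarrow> 's \<Rightarrow> real"
    and psi :: "real \<Rightarrow> nat \<Rightarrow> ('s \<Rightarrow> real) \<Rightarrow> 'b \<Rightarrow> 's \<Rightarrow> real"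
    and Psi :: "nat \<Rightarrow> ('s \<Rightarrow> real) \<Rightarrow> 's \<Rightarrow> real"
    and J :: "real \<Rightarrow> ('s \<Rightarrow> real) \<Rightarrow> 's \<Rightarrow> 's"
    and h :: "real \<Rightarrow> real list \<Rightarrow> ('s \<Rightarrow> real) \<Rightarrow> ('s \<Rightarrow> real) \<Rightarrow> 's \<Rightarrow> 'b"
    and L_psih L_Qh L_Psi L_lam Qmax lammax vmax :: real
    and \<mu>1 \<mu>2 v1 v2 :: "real \<Rightarrow> real list \<Rightarrow> 's \<Rightarrow> real"
  assumes n_pos: "1 \<le> n" and T_nonneg: "0 \<le> T"
    and lam_pos: "\<And>k t m. k \<in> {1..n} \<Longrightarrow> t \<in> {0..T} \<Longrightarrow> m \<in> prob_simplex \<Longrightarrow> 0 < lam k t m"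
    and lam_le: "\<And>k t m. k \<in> {1..n} \<Longrightarrow> t \<in> {0..T} \<Longrightarrow> m \<in> prob_simplex \<Longrightarrow> lam k t m \<le> lammax"
    and Q_le: "\<And>t k m a. t \<in> {0..T} \<Longrightarrow> k \<le> n \<Longrightarrow> m \<in> prob_simplex \<Longrightarrow> a \<in> A \<Longrightarrow>
                 matnorm (Q t k m a) \<le> Qmax"
    and h_in: "\<And>t u m v i. t \<in> {0..T} \<Longrightarrow> u \<in> Uset n T \<Longrightarrow> m \<in> prob_simplex \<Longrightarrow> h t u m v i \<in> A"
    and L_nonneg: "0 \<le> L_psih" "0 \<le> L_Qh" "0 \<le> L_Psi" "0 \<le> L_lam"
    and cond_i: "\<And>t u m1 m2 w1 w2. t \<in> {0..T} \<Longrightarrow> u \<in> Uset n T \<Longrightarrow> m1 \<in> prob_simplex \<Longrightarrow>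
       m2 \<in> prob_simplex \<Longrightarrow>
       maxnorm (\<lambda>i. psi t (Z u) m1 (h t u m1 w1 i) i - psi t (Z u) m2 (h t u m2 w2 i) i)
         \<le> L_psih * (maxnorm (\<lambda>i. m1 i - m2 i) + maxnorm (\<lambda>i. w1 i - w2 i))"
    and cond_ii: "\<And>t u m1 m2 w1 w2. t \<in> {0..T} \<Longrightarrow> u \<in> Uset n T \<Longrightarrow> m1 \<in> prob_simplex \<Longrightarrow>
       m2 \<in> prob_simplex \<Longrightarrow>
       matnorm (\<lambda>i j. Q t (Z u) m1 (h t u m1 w1 i) i j - Q t (Z u) m2 (h t u m2 w2 i) i j)
         \<le> L_Qh * (maxnorm (\<lambda>i. m1 i - m2 i) + maxnorm (\<lambda>i. w1 i - w2 i))"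
    and cond_iii: "\<And>k m1 m2. k \<le> n \<Longrightarrow> m1 \<in> prob_simplex \<Longrightarrow> m2 \<in> prob_simplex \<Longrightarrow>
       maxnorm (\<lambda>i. Psi k m1 i - Psi k m2 i) \<le> L_Psi * maxnorm (\<lambda>i. m1 i - m2 i)"
    and cond_iv: "\<And>k t m1 m2. k \<in> {1..n} \<Longrightarrow> t \<in> {0..T} \<Longrightarrow> m1 \<in> prob_simplex \<Longrightarrow>
       m2 \<in> prob_simplex \<Longrightarrow> \<bar>lam k t m1 - lam k t m2\<bar> \<le> L_lam * maxnorm (\<lambda>i. m1 i - m2 i)"
    and cond_v: "\<And>t m1 m2. t \<in> {0..T} \<Longrightarrow> m1 \<in> prob_simplex \<Longrightarrow> m2 \<in> prob_simplex \<Longrightarrow>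
       J t m1 = J t m2"
    and mu1: "\<mu>1 \<in> Mset n T Qmax" and mu2: "\<mu>2 \<in> Mset n T Qmax"
    and v1V: "v1 \<in> Vset n T vmax" and v2V: "v2 \<in> Vset n T vmax"
    and v1_sol: "regular_solution n T lam (\<lambda>i j t u m v. Q t (Z u) m (h t u m v i) i j)
                   (\<lambda>i t u m v. psi t (Z u) m (h t u m v i) i) Psi J \<mu>1 v1"
    and v2_sol: "regular_solution n T lam (\<lambda>i j t u m v. Q t (Z u) m (h t u m v i) i j)
                   (\<lambda>i t u m v. psi t (Z u) m (h t u m v i) i) Psi J \<mu>2 v2"
begin

definition K1 :: real where "K1 = L_psih + L_Qh * vmax + 2 * vmax * L_lam"

definition K2 :: real where "K2 = L_psih + vmax * L_Qh + Qmax + lammax"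

definition backward_rhs :: "(real \<Rightarrow> real list \<Rightarrow> 's \<Rightarrow> real) \<Rightarrow> (real \<Rightarrow> real list \<Rightarrow> 's \<Rightarrow> real) \<Rightarrow>
    real \<Rightarrow> real list \<Rightarrow> 's \<Rightarrow> real" where
  "backward_rhs \<mu> v t u i = - psi t (Z u) (\<mu> t u) (h t u (\<mu> t u) (v t u) i) i
     - (\<Sum>j\<in>UNIV. Q t (Z u) (\<mu> t u) (h t u (\<mu> t u) (v t u) i) i j * v t u j)
     - (if Z u < n then lam (Z u + 1) t (\<mu> t u) * (v t (push u t) (J t (\<mu> t u) i) - v t u i)
        else 0)"

lemma regular_solutionD:
  assumes "regular_solution n T lam (\<lambda>i j t u m v. Q t (Z u) m (h t u m v i) i j)
             (\<lambda>i t u m v. psi t (Z u) m (h t u m v i) i) Psi J \<mu> v"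
    and "u \<in> Uset n T"
  shows "abs_cont_on (tstart u) T (\<lambda>t. v t u)"
    and "AE t in lborel. t \<in> {tstart u..T} \<longrightarrow>
           (\<forall>i. ((\<lambda>s. v s u i) has_real_derivative backward_rhs \<mu> v t u i)
                  (at t within {tstart u..T}))"
    and "v T u = Psi (Z u) (\<mu> T u)"
  using assms unfolding regular_solution_def backward_rhs_def by auto

lemma \<mu>_simplex:
  assumes "(t, u) \<in> TS n T"
  shows "\<mu>1 t u \<in> prob_simplex" and "\<mu>2 t u \<in> prob_simplex"
  using mu1 mu2 assms unfolding Mset_def by auto

lemma v_le:
  assumes "(t, u) \<in> TS n T"
  shows "maxnorm (v1 t u) \<le> vmax" and "maxnorm (v2 t u) \<le> vmax"
  using v1V v2V assms unfolding Vset_def by auto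

lemma vmax_nonneg: "0 \<le> vmax"
  using v_le(1)[OF replicate_mem_TS[OF T_nonneg]] maxnorm_nonneg order_trans by blast

lemma Qmax_nonneg: "0 \<le> Qmax"
proof -
  define u0 where "u0 = (replicate n (-1) :: real list)"
  have "(0, u0) \<in> TS n T" unfolding u0_def by (rule replicate_mem_TS[OF T_nonneg])
  then have "(0::real) \<in> {0..T}" "u0 \<in> Uset n T" "\<mu>1 0 u0 \<in> prob_simplex"
    using \<mu>_simplex(1) by (auto simp: TS_def)
  from Q_le[OF this(1) UsetD(2)[OF this(2)] this(3) h_in[OF this]]
  show ?thesis by (rule order_trans[OF matnorm_nonneg])
qed

lemma lammax_nonneg: "0 \<le> lammax"
proof -
  have "(0, replicate n (-1)) \<in> TS n T" by (rule replicate_mem_TS[OF T_nonneg])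
  then have "(1::nat) \<in> {1..n}" "(0::real) \<in> {0..T}" "\<mu>1 0 (replicate n (-1)) \<in> prob_simplex"
    using n_pos \<mu>_simplex(1) by (auto simp: TS_def)
  from lam_pos[OF this] lam_le[OF this] show ?thesis by simp
qed

lemma K1_nonneg: "0 \<le> K1"
  unfolding K1_def using L_nonneg vmax_nonneg by simp

lemma K2_nonneg: "0 \<le> K2"
  unfolding K2_def using L_nonneg vmax_nonneg Qmax_nonneg lammax_nonneg by simp

lemma hat_Q_matnorm_le:
  assumes "t \<in> {0..T}" and "u \<in> Uset n T" and "m \<in> prob_simplex"
  shows "matnorm (\<lambda>i j. Q t (Z u) m (h t u m w i) i j) \<le> Qmax"
proof (rule matnorm_leI)
  fix i
  have "(\<Sum>j\<in>UNIV. \<bar>Q t (Z u) m (h t u m w i) i j\<bar>) \<le> matnorm (Q t (Z u) m (h t u m w i))"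
    by (rule row_sum_le_matnorm)
  also have "\<dots> \<le> Qmax"
    using Q_le[OF assms(1) UsetD(2)[OF assms(2)] assms(3) h_in[OF assms]] .
  finally show "(\<Sum>j\<in>UNIV. \<bar>Q t (Z u) m (h t u m w i) i j\<bar>) \<le> Qmax" .
qed

lemma jump_term_diff_le:
  assumes tu: "(t, u) \<in> TS n T" and "Z u < n"
    and push: "maxnorm (\<lambda>i. v1 t (push u t) i - v2 t (push u t) i) \<le> B"
  shows "\<bar>lam (Z u + 1) t (\<mu>1 t u) * (v1 t (push u t) (J t (\<mu>1 t u) i) - v1 t u i)
          - lam (Z u + 1) t (\<mu>2 t u) * (v2 t (push u t) (J t (\<mu>2 t u) i) - v2 t u i)\<bar>
         \<le> 2 * vmax * L_lam * maxnorm (\<lambda>i. \<mu>1 t u i - \<mu>2 t u i)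
           + lammax * (B + maxnorm (\<lambda>i. v1 t u i - v2 t u i))"
proof -
  note tu' = TS_D[OF tu] \<mu>_simplex[OF tu]
  have k: "Z u + 1 \<in> {1..n}" using \<open>Z u < n\<close> by simp
  define j where "j = J t (\<mu>1 t u) i"
  have j2: "J t (\<mu>2 t u) i = j" using cond_v[OF tu'(1,4,3)] by (simp add: j_def)
  have "(t, push u t) \<in> TS n T" by (rule push_mem_TS(1)[OF tu \<open>Z u < n\<close>])
  then have "\<bar>v1 t (push u t) j - v1 t u i\<bar> \<le> 2 * vmax"
    using abs_le_maxnorm[of "v1 t (push u t)" j] abs_le_maxnorm[of "v1 t u" i] v_le(1)[OF tu]
      v_le(1)[of t "push u t"] by linarith
  moreover have "\<bar>lam (Z u + 1) t (\<mu>1 t u) - lam (Z u + 1) t (\<mu>2 t u)\<bar>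
      \<le> L_lam * maxnorm (\<lambda>i. \<mu>1 t u i - \<mu>2 t u i)"
    by (rule cond_iv[OF k tu'(1,3,4)])
  ultimately have "\<bar>lam (Z u + 1) t (\<mu>1 t u) - lam (Z u + 1) t (\<mu>2 t u)\<bar>
      * \<bar>v1 t (push u t) j - v1 t u i\<bar> \<le> L_lam * maxnorm (\<lambda>i. \<mu>1 t u i - \<mu>2 t u i) * (2 * vmax)"
    using L_nonneg(4) maxnorm_nonneg by (intro mult_mono) auto
  moreover have "\<bar>lam (Z u + 1) t (\<mu>2 t u)\<bar>
      * \<bar>(v1 t (push u t) j - v1 t u i) - (v2 t (push u t) j - v2 t u i)\<bar> \<le> lammax * (B + maxnorm (\<lambda>i. v1 t u i - v2 t u i))"
  proof (rule mult_mono)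
    show "\<bar>lam (Z u + 1) t (\<mu>2 t u)\<bar> \<le> lammax"
      using lam_pos[OF k tu'(1,4)] lam_le[OF k tu'(1,4)] by simp
    show "\<bar>(v1 t (push u t) j - v1 t u i) - (v2 t (push u t) j - v2 t u i)\<bar>
        \<le> B + maxnorm (\<lambda>i. v1 t u i - v2 t u i)"
      using abs_le_maxnorm[of "\<lambda>i. v1 t (push u t) i - v2 t (push u t) i" j]
        abs_le_maxnorm[of "\<lambda>i. v1 t u i - v2 t u i" i] push by linarith
  qed (simp_all add: lammax_nonneg)
  ultimately show ?thesis
    unfolding j_def[symmetric] j2
    using abs_mult_diff_le[of "lam (Z u + 1) t (\<mu>1 t u)" "v1 t (push u t) j - v1 t u i"
        "lam (Z u + 1) t (\<mu>2 t u)" "v2 t (push u t) j - v2 t u i"]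
    by (simp add: algebra_simps)
qed

lemma backward_rhs_diff_le:
  assumes tu: "(t, u) \<in> TS n T" and "0 \<le> B"
    and push: "Z u < n \<Longrightarrow> maxnorm (\<lambda>i. v1 t (push u t) i - v2 t (push u t) i) \<le> B"
  shows "\<bar>backward_rhs \<mu>1 v1 t u i - backward_rhs \<mu>2 v2 t u i\<bar>
         \<le> K1 * maxnorm (\<lambda>i. \<mu>1 t u i - \<mu>2 t u i) + lammax * B
           + K2 * maxnorm (\<lambda>i. v1 t u i - v2 t u i)"
proof -
  note tu' = TS_D[OF tu] \<mu>_simplex[OF tu]
  define d\<mu> dv where "d\<mu> = maxnorm (\<lambda>i. \<mu>1 t u i - \<mu>2 t u i)"
    and "dv = maxnorm (\<lambda>i. v1 t u i - v2 t u i)"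
  have "0 \<le> d\<mu>" "0 \<le> dv" unfolding d\<mu>_def dv_def by (simp_all add: maxnorm_nonneg)
  have psi_diff: "\<bar>psi t (Z u) (\<mu>1 t u) (h t u (\<mu>1 t u) (v1 t u) i) i
      - psi t (Z u) (\<mu>2 t u) (h t u (\<mu>2 t u) (v2 t u) i) i\<bar> \<le> L_psih * (d\<mu> + dv)"
    using abs_le_maxnorm[of "\<lambda>i. psi t (Z u) (\<mu>1 t u) (h t u (\<mu>1 t u) (v1 t u) i) i
        - psi t (Z u) (\<mu>2 t u) (h t u (\<mu>2 t u) (v2 t u) i) i" i]
      cond_i[OF tu', of "v1 t u" "v2 t u"]
    unfolding d\<mu>_def dv_def by linarith
  have "matnorm (\<lambda>i j. Q t (Z u) (\<mu>1 t u) (h t u (\<mu>1 t u) (v1 t u) i) i j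
      - Q t (Z u) (\<mu>2 t u) (h t u (\<mu>2 t u) (v2 t u) i) i j) * maxnorm (v1 t u)
      \<le> L_Qh * (d\<mu> + dv) * vmax"
    using cond_ii[OF tu', of "v1 t u" "v2 t u"] v_le(1)[OF tu] L_nonneg(2) \<open>0 \<le> d\<mu>\<close> \<open>0 \<le> dv\<close>
    unfolding d\<mu>_def dv_def by (intro mult_mono) (simp_all add: matnorm_nonneg maxnorm_nonneg)
  moreover have "matnorm (\<lambda>i j. Q t (Z u) (\<mu>2 t u) (h t u (\<mu>2 t u) (v2 t u) i) i j) * dv
      \<le> Qmax * dv"
    using hat_Q_matnorm_le[OF tu'(1,2,4)] \<open>0 \<le> dv\<close> by (rule mult_right_mono)
  ultimately have Q_diff: "\<bar>(\<Sum>j\<in>UNIV. Q t (Z u) (\<mu>1 t u) (h t u (\<mu>1 t u) (v1 t u) i) i j * v1 t u j)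
      - (\<Sum>j\<in>UNIV. Q t (Z u) (\<mu>2 t u) (h t u (\<mu>2 t u) (v2 t u) i) i j * v2 t u j)\<bar>
      \<le> L_Qh * (d\<mu> + dv) * vmax + Qmax * dv"
    using abs_mat_vec_diff_le[of "\<lambda>i j. Q t (Z u) (\<mu>1 t u) (h t u (\<mu>1 t u) (v1 t u) i) i j" i
        "v1 t u" "\<lambda>i j. Q t (Z u) (\<mu>2 t u) (h t u (\<mu>2 t u) (v2 t u) i) i j" "v2 t u"]
    unfolding dv_def by linarith
  have jump_diff: "\<bar>(if Z u < n
        then lam (Z u + 1) t (\<mu>1 t u) * (v1 t (push u t) (J t (\<mu>1 t u) i) - v1 t u i) else 0)
      - (if Z u < n
        then lam (Z u + 1) t (\<mu>2 t u) * (v2 t (push u t) (J t (\<mu>2 t u) i) - v2 t u i) else 0)\<bar>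
      \<le> 2 * vmax * L_lam * d\<mu> + lammax * (B + dv)"
    using jump_term_diff_le[OF tu _ push] vmax_nonneg L_nonneg(4) lammax_nonneg
      \<open>0 \<le> B\<close> \<open>0 \<le> d\<mu>\<close> \<open>0 \<le> dv\<close>
    unfolding d\<mu>_def dv_def by auto
  have "\<bar>backward_rhs \<mu>1 v1 t u i - backward_rhs \<mu>2 v2 t u i\<bar>
      \<le> L_psih * (d\<mu> + dv) + (L_Qh * (d\<mu> + dv) * vmax + Qmax * dv)
        + (2 * vmax * L_lam * d\<mu> + lammax * (B + dv))"
    using psi_diff Q_diff jump_diff unfolding backward_rhs_def by linarith
  also have "\<dots> = K1 * d\<mu> + lammax * B + K2 * dv"
    unfolding K1_def K2_def by (simp add: algebra_simps)
  finally show ?thesis unfolding d\<mu>_def dv_def .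
qed

lemma solution_diff_deriv_le:
  assumes dm: "\<And>t u. (t, u) \<in> TS n T \<Longrightarrow> maxnorm (\<lambda>i. \<mu>1 t u i - \<mu>2 t u i) \<le> dm"
    and "0 \<le> B"
    and push: "\<And>t. (t, u) \<in> TS n T \<Longrightarrow> Z u < n \<Longrightarrow>
                 maxnorm (\<lambda>i. v1 t (push u t) i - v2 t (push u t) i) \<le> B"
    and u: "u \<in> Uset n T"
  shows "AE s in lborel. s \<in> {tstart u..T} \<longrightarrow> (\<forall>i. \<exists>D.
           ((\<lambda>s. v1 s u i - v2 s u i) has_real_derivative D) (at s within {tstart u..T})
           \<and> \<bar>D\<bar> \<le> K1 * dm + lammax * B + K2 * maxnorm (\<lambda>i. v1 s u i - v2 s u i))"
  using regular_solutionD(2)[OF v1_sol u] regular_solutionD(2)[OF v2_sol u]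
proof eventually_elim
  case (elim s)
  show ?case
  proof (intro impI allI)
    fix i assume s: "s \<in> {tstart u..T}"
    then have su: "(s, u) \<in> TS n T" using u by (simp add: mem_TS_iff)
    have "((\<lambda>s. v1 s u i - v2 s u i) has_real_derivative
        backward_rhs \<mu>1 v1 s u i - backward_rhs \<mu>2 v2 s u i) (at s within {tstart u..T})"
      using elim s by (intro DERIV_diff) auto
    moreover have "\<bar>backward_rhs \<mu>1 v1 s u i - backward_rhs \<mu>2 v2 s u i\<bar>
        \<le> K1 * maxnorm (\<lambda>i. \<mu>1 s u i - \<mu>2 s u i) + lammax * B
          + K2 * maxnorm (\<lambda>i. v1 s u i - v2 s u i)"
      by (rule backward_rhs_diff_le[OF su \<open>0 \<le> B\<close> push[OF su]])
    moreover have "K1 * maxnorm (\<lambda>i. \<mu>1 s u i - \<mu>2 s u i) \<le> K1 * dm"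
      using dm[OF su] K1_nonneg by (rule mult_left_mono)
    ultimately show "\<exists>D. ((\<lambda>s. v1 s u i - v2 s u i) has_real_derivative D)
        (at s within {tstart u..T})
        \<and> \<bar>D\<bar> \<le> K1 * dm + lammax * B + K2 * maxnorm (\<lambda>i. v1 s u i - v2 s u i)"
      by (intro exI conjI) (assumption, linarith)
  qed
qed

lemma solution_diff_terminal_le:
  assumes dm: "\<And>t u. (t, u) \<in> TS n T \<Longrightarrow> maxnorm (\<lambda>i. \<mu>1 t u i - \<mu>2 t u i) \<le> dm"
    and u: "u \<in> Uset n T"
  shows "maxnorm (\<lambda>i. v1 T u i - v2 T u i) \<le> L_Psi * dm"
proof -
  have Tu: "(T, u) \<in> TS n T" using u T_nonneg tstart_le[OF u] by (simp add: mem_TS_iff)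
  have "maxnorm (\<lambda>i. v1 T u i - v2 T u i) \<le> L_Psi * maxnorm (\<lambda>i. \<mu>1 T u i - \<mu>2 T u i)"
    using cond_iii[OF UsetD(2)[OF u] \<mu>_simplex[OF Tu]]
    unfolding regular_solutionD(3)[OF v1_sol u] regular_solutionD(3)[OF v2_sol u] .
  also have "\<dots> \<le> L_Psi * dm" using dm[OF Tu] L_nonneg(3) by (rule mult_left_mono)
  finally show ?thesis .
qed

lemma solution_diff_le_of_push_bound:
  assumes dm: "\<And>t u. (t, u) \<in> TS n T \<Longrightarrow> maxnorm (\<lambda>i. \<mu>1 t u i - \<mu>2 t u i) \<le> dm"
    and "0 \<le> B"
    and push: "\<And>t. (t, u) \<in> TS n T \<Longrightarrow> Z u < n \<Longrightarrow>
                 maxnorm (\<lambda>i. v1 t (push u t) i - v2 t (push u t) i) \<le> B"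
    and tu: "(t, u) \<in> TS n T"
  shows "maxnorm (\<lambda>i. v1 t u i - v2 t u i)
           \<le> (L_Psi * dm + (K1 * dm + lammax * B) * T) * exp (K2 * T)"
proof -
  have u: "u \<in> Uset n T" and "0 \<le> t" and "t \<in> {tstart u..T}"
    using TS_D[OF tu] tu by (auto simp: mem_TS_iff)
  have "0 \<le> dm" using dm[OF tu] maxnorm_nonneg order_trans by blast
  define \<alpha> where "\<alpha> = K1 * dm + lammax * B"
  have "0 \<le> \<alpha>"
    unfolding \<alpha>_def using K1_nonneg \<open>0 \<le> dm\<close> lammax_nonneg \<open>0 \<le> B\<close> by simp
  have "maxnorm (\<lambda>i. v1 t u i - v2 t u i) \<le> (L_Psi * dm + \<alpha> * (T - t)) * exp (K2 * (T - t))"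
    using abs_cont_on_diff[OF regular_solutionD(1)[OF v1_sol u] regular_solutionD(1)[OF v2_sol u]]
      solution_diff_deriv_le[OF dm \<open>0 \<le> B\<close> push u] \<open>0 \<le> \<alpha>\<close> K2_nonneg
      solution_diff_terminal_le[OF dm u] \<open>t \<in> {tstart u..T}\<close>
    unfolding \<alpha>_def by (rule abs_cont_on_maxnorm_gronwall)
  also have "\<dots> \<le> (L_Psi * dm + \<alpha> * T) * exp (K2 * T)"
  proof (rule mult_mono)
    show "L_Psi * dm + \<alpha> * (T - t) \<le> L_Psi * dm + \<alpha> * T"
      using \<open>0 \<le> t\<close> \<open>0 \<le> \<alpha>\<close> by (simp add: mult_left_mono)
    show "exp (K2 * (T - t)) \<le> exp (K2 * T)"
      using \<open>0 \<le> t\<close> K2_nonneg by (simp add: mult_left_mono)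
    show "0 \<le> L_Psi * dm + \<alpha> * T"
      using L_nonneg(3) \<open>0 \<le> dm\<close> \<open>0 \<le> \<alpha>\<close> T_nonneg by simp
  qed simp
  finally show ?thesis unfolding \<alpha>_def .
qed

lemma solution_diff_le_geometric:
  assumes dm: "\<And>t u. (t, u) \<in> TS n T \<Longrightarrow> maxnorm (\<lambda>i. \<mu>1 t u i - \<mu>2 t u i) \<le> dm"
  shows "(t, u) \<in> TS n T \<Longrightarrow> n \<le> Z u + j \<Longrightarrow> maxnorm (\<lambda>i. v1 t u i - v2 t u i)
           \<le> (L_Psi + K1 * T) * exp (K2 * T) * (\<Sum>i\<le>j. (exp (K2 * T) * lammax * T) ^ i) * dm"
proof (induction j arbitrary: t u)
  case 0
  then have "\<not> Z u < n" by simp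
  then show ?case
    using solution_diff_le_of_push_bound[OF dm order_refl _ "0.prems"(1)]
    by (simp add: algebra_simps)
next
  case (Suc j)
  define C r where "C = (L_Psi + K1 * T) * exp (K2 * T)" and "r = exp (K2 * T) * lammax * T"
  have "0 \<le> dm" using dm[OF Suc.prems(1)] maxnorm_nonneg order_trans by blast
  have B: "0 \<le> C * (\<Sum>i\<le>j. r ^ i) * dm"
    unfolding C_def r_def using L_nonneg K1_nonneg T_nonneg lammax_nonneg \<open>0 \<le> dm\<close>
    by (intro mult_nonneg_nonneg sum_nonneg zero_le_power) auto
  \<comment> \<open>after a jump \<open>Z\<close> has increased by one, so the induction hypothesis bounds the jump term\<close>
  have push: "maxnorm (\<lambda>i. v1 t' (push u t') i - v2 t' (push u t') i) \<le> C * (\<Sum>i\<le>j. r ^ i) * dm"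
    if "(t', u) \<in> TS n T" "Z u < n" for t'
    using Suc.IH[OF push_mem_TS(1)[OF that]] push_mem_TS(2)[OF that] Suc.prems(2)
    unfolding C_def r_def by simp
  have "maxnorm (\<lambda>i. v1 t u i - v2 t u i)
      \<le> (L_Psi * dm + (K1 * dm + lammax * (C * (\<Sum>i\<le>j. r ^ i) * dm)) * T) * exp (K2 * T)"
    by (rule solution_diff_le_of_push_bound[OF dm B push Suc.prems(1)])
  also have "\<dots> = C * (1 + r * (\<Sum>i\<le>j. r ^ i)) * dm"
    unfolding C_def r_def by (simp add: algebra_simps)
  also have "1 + r * (\<Sum>i\<le>j. r ^ i) = (\<Sum>i\<le>Suc j. r ^ i)"
    by (simp add: sum_distrib_left sum.atMost_Suc_shift del: sum.atMost_Suc)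
  finally show ?case unfolding C_def r_def .
qed

theorem SUP_solution_diff_le:
  "(SUP (t, u)\<in>TS n T. maxnorm (\<lambda>i. v1 t u i - v2 t u i))
     \<le> (L_Psi + K1 * T) * exp (K2 * T) * (\<Sum>i\<le>n. (exp (K2 * T) * lammax * T) ^ i)
       * (SUP (t, u)\<in>TS n T. maxnorm (\<lambda>i. \<mu>1 t u i - \<mu>2 t u i))"
proof -
  define dm where "dm = (SUP (t, u)\<in>TS n T. maxnorm (\<lambda>i. \<mu>1 t u i - \<mu>2 t u i))"
  have bdd: "bdd_above ((\<lambda>(t, u). maxnorm (\<lambda>i. \<mu>1 t u i - \<mu>2 t u i)) ` TS n T)"
  proof (rule bdd_aboveI2)
    fix x assume "x \<in> TS n T"
    then show "(case x of (t, u) \<Rightarrow> maxnorm (\<lambda>i. \<mu>1 t u i - \<mu>2 t u i)) \<le> 1"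
      using maxnorm_simplex_diff_le_1[OF \<mu>_simplex] by (cases x) simp
  qed
  have dm: "maxnorm (\<lambda>i. \<mu>1 t u i - \<mu>2 t u i) \<le> dm" if "(t, u) \<in> TS n T" for t u
    using cSUP_upper[OF that bdd] unfolding dm_def by simp
  have "(SUP (t, u)\<in>TS n T. maxnorm (\<lambda>i. v1 t u i - v2 t u i))
      \<le> (L_Psi + K1 * T) * exp (K2 * T) * (\<Sum>i\<le>n. (exp (K2 * T) * lammax * T) ^ i) * dm"
  proof (rule cSUP_least)
    show "TS n T \<noteq> {}" using replicate_mem_TS[OF T_nonneg] by blast
    fix x assume "x \<in> TS n T"
    then show "(case x of (t, u) \<Rightarrow> maxnorm (\<lambda>i. v1 t u i - v2 t u i))
        \<le> (L_Psi + K1 * T) * exp (K2 * T) * (\<Sum>i\<le>n. (exp (K2 * T) * lammax * T) ^ i) * dm"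
      using solution_diff_le_geometric[OF dm, where j = n] by (cases x) simp
  qed
  then show ?thesis unfolding dm_def .
qed

end

theorem lemmaB6:
  fixes n :: nat and T :: real
    and A :: "'b::euclidean_space set"
    and lam :: "nat \<Rightarrow> real \<Rightarrow> ('s::finite \<Rightarrow> real) \<Rightarrow> real"
    and Q :: "real \<Rightarrow> nat \<Rightarrow> ('s \<Rightarrow> real) \<Rightarrow> 'b \<Rightarrow> 's \<Rightarrow> 's \<Rightarrow> real"
    and psi :: "real \<Rightarrow> nat \<Rightarrow> ('s \<Rightarrow> real) \<Rightarrow> 'b \<Rightarrow> 's \<Rightarrow> real"
    and Psi :: "nat \<Rightarrow> ('s \<Rightarrow> real) \<Rightarrow> 's \<Rightarrow> real"
    and J :: "real \<Rightarrow> ('s \<Rightarrow> real) \<Rightarrow> 's \<Rightarrow> 's"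
    and h :: "real \<Rightarrow> real list \<Rightarrow> ('s \<Rightarrow> real) \<Rightarrow> ('s \<Rightarrow> real) \<Rightarrow> 's \<Rightarrow> 'b"
    and L_psih L_Qh L_Psi L_lam Qmax psimax Psimax lammax vmax K1 K2 :: real
    and \<mu>1 \<mu>2 v1 v2 :: "real \<Rightarrow> real list \<Rightarrow> 's \<Rightarrow> real"
  assumes n_pos: "1 \<le> n" and T_pos: "0 < T"
    (* standing assumptions on the data *)
    and lam_pos: "\<And>k t m. k \<in> {1..n} \<Longrightarrow> t \<in> {0..T} \<Longrightarrow> m \<in> prob_simplex \<Longrightarrow> 0 < lam k t m"
    and lam_bdd: "bdd_above {lam k t m | k t m. k \<in> {1..n} \<and> t \<in> {0..T} \<and> m \<in> prob_simplex}"
    and Q_int: "\<And>t k m a. t \<in> {0..T} \<Longrightarrow> k \<le> n \<Longrightarrow> m \<in> prob_simplex \<Longrightarrow> a \<in> A \<Longrightarrow>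
                   intensity_matrix (Q t k m a)"
    and Q_bdd: "bdd_above {matnorm (Q t k m a) | t k m a. t \<in> {0..T} \<and> k \<le> n \<and> m \<in> prob_simplex \<and> a \<in> A}"
    and psi_bdd: "bdd_above {maxnorm (psi t k m a) | t k m a. t \<in> {0..T} \<and> k \<le> n \<and> m \<in> prob_simplex \<and> a \<in> A}"
    and Psi_bdd: "bdd_above {maxnorm (Psi k m) | k m. k \<le> n \<and> m \<in> prob_simplex}"
    (* the maximizer h *)
    and h_in: "\<And>t u m v i. t \<in> {0..T} \<Longrightarrow> u \<in> Uset n T \<Longrightarrow> m \<in> prob_simplex \<Longrightarrow> h t u m v i \<in> A"
    and h_max: "\<And>t u m v i a. t \<in> {0..T} \<Longrightarrow> u \<in> Uset n T \<Longrightarrow> m \<in> prob_simplex \<Longrightarrow> a \<in> A \<Longrightarrow>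
       psi t (Z u) m a i + (\<Sum>j\<in>UNIV. Q t (Z u) m a i j * v j)
         \<le> psi t (Z u) m (h t u m v i) i + (\<Sum>j\<in>UNIV. Q t (Z u) m (h t u m v i) i j * v j)"
    (* conditions (i)-(v) *)
    and L_nonneg: "0 \<le> L_psih" "0 \<le> L_Qh" "0 \<le> L_Psi" "0 \<le> L_lam"
    and cond_i: "\<And>t u m1 m2 w1 w2. t \<in> {0..T} \<Longrightarrow> u \<in> Uset n T \<Longrightarrow> m1 \<in> prob_simplex \<Longrightarrow> m2 \<in> prob_simplex \<Longrightarrow>
       maxnorm (\<lambda>i. psi t (Z u) m1 (h t u m1 w1 i) i - psi t (Z u) m2 (h t u m2 w2 i) i)
         \<le> L_psih * (maxnorm (\<lambda>i. m1 i - m2 i) + maxnorm (\<lambda>i. w1 i - w2 i))"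
    and cond_ii: "\<And>t u m1 m2 w1 w2. t \<in> {0..T} \<Longrightarrow> u \<in> Uset n T \<Longrightarrow> m1 \<in> prob_simplex \<Longrightarrow> m2 \<in> prob_simplex \<Longrightarrow>
       matnorm (\<lambda>i j. Q t (Z u) m1 (h t u m1 w1 i) i j - Q t (Z u) m2 (h t u m2 w2 i) i j)
         \<le> L_Qh * (maxnorm (\<lambda>i. m1 i - m2 i) + maxnorm (\<lambda>i. w1 i - w2 i))"
    and cond_iii: "\<And>k m1 m2. k \<le> n \<Longrightarrow> m1 \<in> prob_simplex \<Longrightarrow> m2 \<in> prob_simplex \<Longrightarrow>
       maxnorm (\<lambda>i. Psi k m1 i - Psi k m2 i) \<le> L_Psi * maxnorm (\<lambda>i. m1 i - m2 i)"
    and cond_iv: "\<And>k t m1 m2. k \<in> {1..n} \<Longrightarrow> t \<in> {0..T} \<Longrightarrow> m1 \<in> prob_simplex \<Longrightarrow> m2 \<in> prob_simplex \<Longrightarrow>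
       \<bar>lam k t m1 - lam k t m2\<bar> \<le> L_lam * maxnorm (\<lambda>i. m1 i - m2 i)"
    and cond_v: "\<And>t m1 m2. t \<in> {0..T} \<Longrightarrow> m1 \<in> prob_simplex \<Longrightarrow> m2 \<in> prob_simplex \<Longrightarrow> J t m1 = J t m2"
    (* constants *)
    and Qmax_def: "Qmax = (SUP (t,k,m,a)\<in>{(t,k,m,a). t \<in> {0..T} \<and> k \<le> n \<and> m \<in> prob_simplex \<and> a \<in> A}.
                              matnorm (Q t k m a))"
    and psimax_def: "psimax = (SUP (t,k,m,a)\<in>{(t,k,m,a). t \<in> {0..T} \<and> k \<le> n \<and> m \<in> prob_simplex \<and> a \<in> A}.
                              maxnorm (psi t k m a))"
    and Psimax_def: "Psimax = (SUP (k,m)\<in>{(k,m). k \<le> n \<and> m \<in> prob_simplex}. maxnorm (Psi k m))"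
    and lammax_def: "lammax = (SUP (k,t,m)\<in>{(k,t,m). k \<in> {1..n} \<and> t \<in> {0..T} \<and> m \<in> prob_simplex}. lam k t m)"
    and vmax_def: "vmax = (Psimax + psimax * T) * exp ((Qmax + lammax) * T)
                     * (\<Sum>i\<le>n. (exp ((Qmax + lammax) * T) * lammax * T) ^ i)"
    and K1_def: "K1 = L_psih + L_Qh * vmax + 2 * vmax * L_lam"
    and K2_def: "K2 = L_psih + vmax * L_Qh + Qmax + lammax"
    (* mu_1, mu_2 in M and v_1 = F(mu_1), v_2 = F(mu_2) *)
    and mu1: "\<mu>1 \<in> Mset n T Qmax" and mu2: "\<mu>2 \<in> Mset n T Qmax"
    and v1V: "v1 \<in> Vset n T vmax" and v2V: "v2 \<in> Vset n T vmax"
    and v1: "regular_solution n T lam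
               (\<lambda>i j t u m v. Q t (Z u) m (h t u m v i) i j)
               (\<lambda>i t u m v. psi t (Z u) m (h t u m v i) i) Psi J \<mu>1 v1"
    and v2: "regular_solution n T lam
               (\<lambda>i j t u m v. Q t (Z u) m (h t u m v i) i j)
               (\<lambda>i t u m v. psi t (Z u) m (h t u m v i) i) Psi J \<mu>2 v2"
  shows "(SUP (t,u)\<in>TS n T. maxnorm (\<lambda>i. v1 t u i - v2 t u i))
           \<le> (L_Psi + K1 * T) * exp (K2 * T) * (\<Sum>i\<le>n. (exp (K2 * T) * lammax * T) ^ i)
             * (SUP (t,u)\<in>TS n T. maxnorm (\<lambda>i. \<mu>1 t u i - \<mu>2 t u i))"
proof -
  have Q_le: "matnorm (Q t k m a) \<le> Qmax"
    if "t \<in> {0..T}" "k \<le> n" "m \<in> prob_simplex" "a \<in> A" for t k m a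
    unfolding Qmax_def using that
    by (intro cSUP_upper2[where x="(t, k, m, a)"] bdd_above_mono[OF Q_bdd]) auto
  have lam_le: "lam k t m \<le> lammax" if "k \<in> {1..n}" "t \<in> {0..T}" "m \<in> prob_simplex" for k t m
    unfolding lammax_def using that
    by (intro cSUP_upper2[where x="(k, t, m)"] bdd_above_mono[OF lam_bdd]) auto
  \<comment> \<open>The maximizing property of \<open>h\<close>, the intensity-matrix property of \<open>Q\<close> and the explicit
    value of \<open>vmax\<close> are not needed: only the bounds on \<open>Q\<close>, \<open>lam\<close> and \<open>v1\<close>, \<open>v2\<close> enter.\<close>
  interpret P: solution_pair n T A lam Q psi Psi J h L_psih L_Qh L_Psi L_lam Qmax lammax vmax
      \<mu>1 \<mu>2 v1 v2
    by (unfold_locales; fact less_imp_le[OF T_pos] n_pos lam_pos lam_le Q_le h_in L_nonneg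
          cond_i cond_ii cond_iii cond_iv cond_v mu1 mu2 v1V v2V v1 v2)
  show ?thesis
    using P.SUP_solution_diff_le unfolding P.K1_def P.K2_def K1_def K2_def .
qed

end
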